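(* Let $V,V'$ be locally convex spaces, $\Omega\subset V$, $\Omega'\subset V'$ open, and let $g,g'$ be Riemannian metrics on $\Omega,\Omega'$ with Levi–Civita connections $D,D'$ of class $C^1$. Suppose $F\colon\Omega'\to\Omega$ is a $C^2$ isometry. If $y\colon I\to\Omega'$ is a $C^1$ curve on an interval $I$ and $\eta\colon I\to V'$ is a $D'$-parallel lift of $y$, then $\xi(t)=F_*|_{y(t)}\eta(t)$ defines a $D$-parallel lift $\xi\colon I\to V$ of $F\circ y$. In particular, if $y$ is a geodesic for $g'$, then $F\circ y$ is a geodesic for $g$.
   Context: All locally convex spaces are real, Hausdorff and sequentially complete. $f$ is $C^1$ if directional derivatives $df(v,\xi)=\lim_{t\to0}(f(v+t\xi)-f(v))/t$ exist and $df$ is continuous; $C^k$ inductively; $F_*|_w=dF(w,\cdot)$. A Riemannian metric on $\Omega$ is a map $g\colon\Omega\times V\times V\to\mathbb R$ with each $g(v,\cdot,\cdot)$ positive definite symmetric bilinear. A connection on $\Omega\times V\to\Omega$ is $D_\xi\varphi(v)=d\varphi(v,\xi)+A(v,\xi)\varphi(v)$ with $A(v,\xi)$ a continuous linear map $V\to V$, linear in $\xi$, $(v,\xi,w)\mapsto A(v,\xi)w$ continuous; of class $C^k$ if this map is $C^k$. For a $C^1$ metric $g$, a Levi–Civita connection is such a $D$ with $A(v,\xi)\eta=A(v,\eta)\xi$ and $\xi g(\cdot,\varphi,\psi)=g(\cdot,D_\xi\varphi,\psi)+g(\cdot,\varphi,D_\xi\psi)$ for all $\xi\in V$, $\varphi,\psi\in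 C^1(\Omega,V)$. For a $C^1$ curve $x\colon I\to\Omega$, a $D$-parallel lift is a $C^1$ map $\xi\colon I\to V$ with $\dot\xi+A(x,\dot x)\xi=0$. A geodesic is a $C^2$ curve $x$ with $\ddot x+A(x,\dot x)\dot x=0$. A $C^2$ isometry $F\colon\Omega'\to\Omega$ is a $C^2$ diffeomorphism of $\Omega'$ onto an open subset of $\Omega$ with $g(F(w),dF(w,\zeta),dF(w,\zeta))=g'(w,\zeta,\zeta)$ for all $w\in\Omega'$, $\zeta\in V'$. *)

theory Defs
  imports "HOL-Analysis.Analysis"
begin

definition lcs_space :: "'a::{real_vector,t2_space} itself \<Rightarrow> bool" where
  "lcs_space _ \<longleftrightarrow>
     \<comment> \<open>topological vector space: addition and scalar multiplication jointly continuous\<close>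
     (\<forall>x y::'a. ((\<lambda>p. fst p + snd p) \<longlongrightarrow> x + y) (nhds x \<times>\<^sub>F nhds y))
   \<and> (\<forall>(r::real) (x::'a). ((\<lambda>p. fst p *\<^sub>R snd p) \<longlongrightarrow> r *\<^sub>R x) (nhds r \<times>\<^sub>F nhds x))
     \<comment> \<open>locally convex\<close>
   \<and> (\<forall>U::'a set. open U \<and> 0 \<in> U \<longrightarrow> (\<exists>W. open W \<and> convex W \<and> 0 \<in> W \<and> W \<subseteq> U))
     \<comment> \<open>sequentially complete\<close>
   \<and> (\<forall>X::nat \<Rightarrow> 'a. (\<forall>U. open U \<and> 0 \<in> U \<longrightarrow> (\<exists>N. \<forall>m\<ge>N. \<forall>n\<ge>N. X m - X n \<in> U))
         \<longrightarrow> (\<exists>L. X \<longlonglongrightarrow> L))"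

definition diffquot :: "('a::real_vector \<Rightarrow> 'b::real_vector) \<Rightarrow> 'a \<Rightarrow> 'a \<Rightarrow> real \<Rightarrow> 'b" where
  "diffquot f v \<xi> t = inverse t *\<^sub>R (f (v + t *\<^sub>R \<xi>) - f v)"

definition dd :: "('a::{real_vector,topological_space} \<Rightarrow> 'b::{real_vector,t2_space}) \<Rightarrow> 'a \<Rightarrow> 'a \<Rightarrow> 'b" where
  "dd f v \<xi> = Lim (at (0::real)) (diffquot f v \<xi>)"

definition C1 :: "'a::{real_vector,topological_space} set \<Rightarrow> ('a \<Rightarrow> 'b::{real_vector,t2_space}) \<Rightarrow> bool" where
  "C1 U f \<longleftrightarrow> (\<forall>v\<in>U. \<forall>\<xi>. \<exists>l. (diffquot f v \<xi> \<longlongrightarrow> l) (at (0::real)))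
     \<and> continuous_on (U \<times> UNIV) (\<lambda>(v, \<xi>). dd f v \<xi>)"

definition C2 :: "'a::{real_vector,topological_space} set \<Rightarrow> ('a \<Rightarrow> 'b::{real_vector,t2_space}) \<Rightarrow> bool" where
  "C2 U f \<longleftrightarrow> C1 U f \<and> C1 (U \<times> UNIV) (\<lambda>(v, \<xi>). dd f v \<xi>)"

definition cderiv :: "(real \<Rightarrow> 'a::{real_vector,t2_space}) \<Rightarrow> real set \<Rightarrow> real \<Rightarrow> 'a" where
  "cderiv x I t = Lim (at t within I) (\<lambda>s. inverse (s - t) *\<^sub>R (x s - x t))"

definition C1_curve :: "real set \<Rightarrow> (real \<Rightarrow> 'a::{real_vector,t2_space}) \<Rightarrow> bool" where
  "C1_curve I x \<longleftrightarrow> (\<forall>t\<in>I. \<exists>l. ((\<lambda>s. inverse (s - t) *\<^sub>R (x s - x t)) \<longlongrightarrow> l) (at t within I))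
     \<and> continuous_on I (cderiv x I)"

definition C2_curve :: "real set \<Rightarrow> (real \<Rightarrow> 'a::{real_vector,t2_space}) \<Rightarrow> bool" where
  "C2_curve I x \<longleftrightarrow> C1_curve I x \<and> C1_curve I (cderiv x I)"

definition riemannian_metric :: "'a::{real_vector,t2_space} set \<Rightarrow> ('a \<Rightarrow> 'a \<Rightarrow> 'a \<Rightarrow> real) \<Rightarrow> bool" where
  "riemannian_metric \<Omega> g \<longleftrightarrow> (\<forall>v\<in>\<Omega>.
      (\<forall>\<xi>. linear (g v \<xi>)) \<and> (\<forall>\<eta>. linear (\<lambda>\<xi>. g v \<xi> \<eta>))
    \<and> (\<forall>\<xi> \<eta>. g v \<xi> \<eta> = g v \<eta> \<xi>)
    \<and> (\<forall>\<xi>. \<xi> \<noteq> 0 \<longrightarrow> g v \<xi> \<xi> > 0))"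

text \<open>A connection D_xi phi (v) = d phi (v,xi) + A(v,xi) phi(v), represented by A v xi w.\<close>
definition connection :: "'a::{real_vector,t2_space} set \<Rightarrow> ('a \<Rightarrow> 'a \<Rightarrow> 'a \<Rightarrow> 'a) \<Rightarrow> bool" where
  "connection \<Omega> A \<longleftrightarrow>
     (\<forall>v\<in>\<Omega>. \<forall>\<xi>. linear (A v \<xi>) \<and> continuous_on UNIV (A v \<xi>))
   \<and> (\<forall>v\<in>\<Omega>. \<forall>w. linear (\<lambda>\<xi>. A v \<xi> w))
   \<and> continuous_on (\<Omega> \<times> UNIV \<times> UNIV) (\<lambda>(v, \<xi>, w). A v \<xi> w)"

definition covd :: "('a::{real_vector,t2_space} \<Rightarrow> 'a \<Rightarrow> 'a \<Rightarrow> 'a) \<Rightarrow> 'a \<Rightarrow> ('a \<Rightarrow> 'a) \<Rightarrow> 'a \<Rightarrow> 'a" where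
  "covd A \<xi> \<phi> v = dd \<phi> v \<xi> + A v \<xi> (\<phi> v)"

definition C1_connection :: "'a::{real_vector,t2_space} set \<Rightarrow> ('a \<Rightarrow> 'a \<Rightarrow> 'a \<Rightarrow> 'a) \<Rightarrow> bool" where
  "C1_connection \<Omega> A \<longleftrightarrow> connection \<Omega> A \<and> C1 (\<Omega> \<times> UNIV \<times> UNIV) (\<lambda>(v, \<xi>, w). A v \<xi> w)"

definition C1_metric :: "'a::{real_vector,t2_space} set \<Rightarrow> ('a \<Rightarrow> 'a \<Rightarrow> 'a \<Rightarrow> real) \<Rightarrow> bool" where
  "C1_metric \<Omega> g \<longleftrightarrow> riemannian_metric \<Omega> g \<and> C1 (\<Omega> \<times> UNIV \<times> UNIV) (\<lambda>(v, \<xi>, \<eta>). g v \<xi> \<eta>)"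

definition levi_civita :: "'a::{real_vector,t2_space} set \<Rightarrow> ('a \<Rightarrow> 'a \<Rightarrow> 'a \<Rightarrow> real) \<Rightarrow> ('a \<Rightarrow> 'a \<Rightarrow> 'a \<Rightarrow> 'a) \<Rightarrow> bool" where
  "levi_civita \<Omega> g A \<longleftrightarrow> C1_metric \<Omega> g \<and> connection \<Omega> A
   \<and> (\<forall>v\<in>\<Omega>. \<forall>\<xi> \<eta>. A v \<xi> \<eta> = A v \<eta> \<xi>)
   \<and> (\<forall>\<xi> \<phi> \<psi>. C1 \<Omega> \<phi> \<longrightarrow> C1 \<Omega> \<psi> \<longrightarrow>
        (\<forall>v\<in>\<Omega>. dd (\<lambda>u. g u (\<phi> u) (\<psi> u)) v \<xi>
                 = g v (covd A \<xi> \<phi> v) (\<psi> v) + g v (\<phi> v) (covd A \<xi> \<psi> v)))"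

definition parallel_lift :: "'a::{real_vector,t2_space} set \<Rightarrow> ('a \<Rightarrow> 'a \<Rightarrow> 'a \<Rightarrow> 'a) \<Rightarrow> real set \<Rightarrow> (real \<Rightarrow> 'a) \<Rightarrow> (real \<Rightarrow> 'a) \<Rightarrow> bool" where
  "parallel_lift \<Omega> A I x \<xi> \<longleftrightarrow> (\<forall>t\<in>I. x t \<in> \<Omega>) \<and> C1_curve I x \<and> C1_curve I \<xi>
     \<and> (\<forall>t\<in>I. cderiv \<xi> I t + A (x t) (cderiv x I t) (\<xi> t) = 0)"

definition geodesic :: "'a::{real_vector,t2_space} set \<Rightarrow> ('a \<Rightarrow> 'a \<Rightarrow> 'a \<Rightarrow> 'a) \<Rightarrow> real set \<Rightarrow> (real \<Rightarrow> 'a) \<Rightarrow> bool" where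
  "geodesic \<Omega> A I x \<longleftrightarrow> (\<forall>t\<in>I. x t \<in> \<Omega>) \<and> C2_curve I x
     \<and> (\<forall>t\<in>I. cderiv (cderiv x I) I t + A (x t) (cderiv x I t) (cderiv x I t) = 0)"

definition C2_diffeo_onto_open :: "'b::{real_vector,t2_space} set \<Rightarrow> 'a::{real_vector,t2_space} set \<Rightarrow> ('b \<Rightarrow> 'a) \<Rightarrow> bool" where
  "C2_diffeo_onto_open \<Omega>' \<Omega> F \<longleftrightarrow> open (F ` \<Omega>') \<and> F ` \<Omega>' \<subseteq> \<Omega> \<and> inj_on F \<Omega>'
     \<and> C2 \<Omega>' F \<and> C2 (F ` \<Omega>') (the_inv_into \<Omega>' F)"

definition C2_isometry :: "'b::{real_vector,t2_space} set \<Rightarrow> ('b \<Rightarrow> 'b \<Rightarrow> 'b \<Rightarrow> real) \<Rightarrow> 'a::{real_vector,t2_space} set \<Rightarrow> ('a \<Rightarrow> 'a \<Rightarrow> 'a \<Rightarrow> real) \<Rightarrow> ('b \<Rightarrow> 'a) \<Rightarrow> bool" where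
  "C2_isometry \<Omega>' g' \<Omega> g F \<longleftrightarrow> C2_diffeo_onto_open \<Omega>' \<Omega> F
     \<and> (\<forall>w\<in>\<Omega>'. \<forall>\<zeta>. g (F w) (dd F w \<zeta>) (dd F w \<zeta>) = g' w \<zeta> \<zeta>)"

end

theory Submission
  imports Defs
begin

text \<open>
  The Koszul formula pulled back along an isometry \<open>F\<close> differs from the Koszul formula of
  \<open>g'\<close> only by second derivatives of \<open>F\<close>. Since \<open>d\<^sup>2F\<close> is symmetric and \<open>dF\<close> is onto,
  this yields the transformation law \<open>dF (A'(\<xi>, \<eta>)) = A (dF \<xi>, dF \<eta>) + d\<^sup>2F (\<xi>, \<eta>)\<close>.
  Differentiating \<open>\<xi>(t) = dF\<^bsub>y(t)\<^esub> \<eta>(t)\<close> then gives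
  \<open>\<xi>' = d\<^sup>2F (y', \<eta>) + dF \<eta>' = d\<^sup>2F (y', \<eta>) - dF (A'(y', \<eta>)) = - A (dF y', \<xi>)\<close>.

  A locally convex space has no mean value theorem and no norm, so the calculus needed here
  (chain rule, additivity of the directional derivative, symmetry of the second derivative) is
  built on a mean value inequality for the Minkowski gauge of a convex neighbourhood of \<open>0\<close>.
\<close>

section \<open>Topological vector spaces\<close>

text \<open>The algebraic and local-convexity parts of \<open>lcs_space\<close>; unlike sequential
  completeness they pass to products, which the argument needs for the bundles
  \<open>\<Omega>' \<times> V'\<close> and \<open>\<Omega> \<times> V \<times> V\<close>.\<close>

definition tvs :: "'a::{real_vector,topological_space} itself \<Rightarrow> bool" where
  "tvs _ \<longleftrightarrow> continuous_on UNIV (\<lambda>p::'a \<times> 'a. fst p + snd p)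
             \<and> continuous_on UNIV (\<lambda>p::real \<times> 'a. fst p *\<^sub>R snd p)"

definition locally_convex :: "'a::{real_vector,topological_space} itself \<Rightarrow> bool" where
  "locally_convex _ \<longleftrightarrow>
     (\<forall>U::'a set. open U \<and> 0 \<in> U \<longrightarrow> (\<exists>W. open W \<and> convex W \<and> 0 \<in> W \<and> W \<subseteq> U))"

lemma tvs_tendsto_add:
  fixes f g :: "'i \<Rightarrow> 'a::{real_vector,topological_space}"
  assumes "tvs TYPE('a)" "(f \<longlongrightarrow> a) F" "(g \<longlongrightarrow> b) F"
  shows "((\<lambda>x. f x + g x) \<longlongrightarrow> a + b) F"
proof -
  have "((\<lambda>x. fst (f x, g x) + snd (f x, g x)) \<longlongrightarrow> fst (a, b) + snd (a, b)) F"
    using assms(1) unfolding tvs_def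
    by (intro continuous_on_tendsto_compose[OF _ tendsto_Pair[OF assms(2,3)]]) auto
  then show ?thesis by simp
qed

lemma tvs_tendsto_scaleR:
  fixes f :: "'i \<Rightarrow> real" and g :: "'i \<Rightarrow> 'a::{real_vector,topological_space}"
  assumes "tvs TYPE('a)" "(f \<longlongrightarrow> a) F" "(g \<longlongrightarrow> b) F"
  shows "((\<lambda>x. f x *\<^sub>R g x) \<longlongrightarrow> a *\<^sub>R b) F"
proof -
  have "((\<lambda>x. fst (f x, g x) *\<^sub>R snd (f x, g x)) \<longlongrightarrow> fst (a, b) *\<^sub>R snd (a, b)) F"
    using assms(1) unfolding tvs_def
    by (intro continuous_on_tendsto_compose[OF _ tendsto_Pair[OF assms(2,3)]]) auto
  then show ?thesis by simp
qed

lemma tvs_tendsto_uminus: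
  fixes f :: "'i \<Rightarrow> 'a::{real_vector,topological_space}"
  assumes "tvs TYPE('a)" "(f \<longlongrightarrow> a) F"
  shows "((\<lambda>x. - f x) \<longlongrightarrow> - a) F"
  using tvs_tendsto_scaleR[OF assms(1) tendsto_const[of "-1"] assms(2)] by simp

lemma tvs_tendsto_diff:
  fixes f g :: "'i \<Rightarrow> 'a::{real_vector,topological_space}"
  assumes "tvs TYPE('a)" "(f \<longlongrightarrow> a) F" "(g \<longlongrightarrow> b) F"
  shows "((\<lambda>x. f x - g x) \<longlongrightarrow> a - b) F"
  using tvs_tendsto_add[OF assms(1,2) tvs_tendsto_uminus[OF assms(1,3)]] by simp

lemma tvs_if_lcs_space: "lcs_space TYPE('a::{real_vector,t2_space}) \<Longrightarrow> tvs TYPE('a)"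
  unfolding lcs_space_def tvs_def continuous_on_def
  by (auto simp: nhds_prod[symmetric] intro: tendsto_mono[OF at_within_le_nhds])

lemma locally_convex_if_lcs_space:
  "lcs_space TYPE('a::{real_vector,t2_space}) \<Longrightarrow> locally_convex TYPE('a)"
  unfolding lcs_space_def locally_convex_def by blast

lemma tvs_real: "tvs TYPE(real)"
  unfolding tvs_def by (intro conjI continuous_intros)

lemma locally_convex_real: "locally_convex TYPE(real)"
  unfolding locally_convex_def
  by (metis Elementary_Metric_Spaces.open_ball centre_in_ball convex_ball open_contains_ball_eq)

lemma tvs_prod:
  assumes "tvs TYPE('a::{real_vector,topological_space})" "tvs TYPE('b::{real_vector,topological_space})"
  shows "tvs TYPE('a \<times> 'b)"
  unfolding tvs_def continuous_on_def
proof (intro conjI ballI)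
  fix q :: "('a \<times> 'b) \<times> ('a \<times> 'b)"
  have "((\<lambda>p. (fst (fst p) + fst (snd p), snd (fst p) + snd (snd p))) \<longlongrightarrow>
        (fst (fst q) + fst (snd q), snd (fst q) + snd (snd q))) (at q within UNIV)"
    by (intro tendsto_Pair tvs_tendsto_add assms tendsto_fst tendsto_snd tendsto_ident_at)
  then show "((\<lambda>p. fst p + snd p) \<longlongrightarrow> fst q + snd q) (at q within UNIV)"
    by (simp add: plus_prod_def)
next
  fix q :: "real \<times> ('a \<times> 'b)"
  have "((\<lambda>p. (fst p *\<^sub>R fst (snd p), fst p *\<^sub>R snd (snd p))) \<longlongrightarrow>
        (fst q *\<^sub>R fst (snd q), fst q *\<^sub>R snd (snd q))) (at q within UNIV)"
    by (intro tendsto_Pair tvs_tendsto_scaleR assms tendsto_fst tendsto_snd tendsto_ident_at)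
  then show "((\<lambda>p. fst p *\<^sub>R snd p) \<longlongrightarrow> fst q *\<^sub>R snd q) (at q within UNIV)"
    by (simp add: scaleR_prod_def)
qed

lemma locally_convex_prod:
  assumes "locally_convex TYPE('a::{real_vector,topological_space})"
    and "locally_convex TYPE('b::{real_vector,topological_space})"
  shows "locally_convex TYPE('a \<times> 'b)"
  unfolding locally_convex_def
proof (intro allI impI)
  fix U :: "('a \<times> 'b) set"
  assume "open U \<and> 0 \<in> U"
  then obtain A B where AB: "open A" "open B" "(0, 0) \<in> A \<times> B" "A \<times> B \<subseteq> U"
    by (metis open_prod_elim zero_prod_def)
  obtain W1 where "open W1" "convex W1" "0 \<in> W1" "W1 \<subseteq> A"
    using assms(1) AB unfolding locally_convex_def by auto
  moreover obtain W2 where "open W2" "convex W2" "0 \<in> W2" "W2 \<subseteq> B"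
    using assms(2) AB unfolding locally_convex_def by auto
  ultimately show "\<exists>W. open W \<and> convex W \<and> 0 \<in> W \<and> W \<subseteq> U"
    using AB by (intro exI[of _ "W1 \<times> W2"]) (auto simp: open_Times convex_Times zero_prod_def)
qed

lemma convex_scaleR_mem:
  assumes "convex V" "0 \<in> V" "x \<in> V" "t \<in> {0..1}"
  shows "t *\<^sub>R x \<in> V"
  using convexD_alt[OF assms(1-3), of t] assms(4) by simp

lemma tvs_continuous_on_affine:
  assumes "tvs TYPE('a::{real_vector,topological_space})"
  shows "continuous_on UNIV (\<lambda>x::'a. y + c *\<^sub>R x)"
  unfolding continuous_on_def
  by (intro ballI tvs_tendsto_add[OF assms] tvs_tendsto_scaleR[OF assms] tendsto_const tendsto_ident_at)

lemma tvs_eventually_line_in_open: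
  fixes U :: "'a::{real_vector,topological_space} set"
  assumes "tvs TYPE('a)" "open U" "v \<in> U"
  shows "eventually (\<lambda>r::real. v + r *\<^sub>R x \<in> U) (at 0)"
proof -
  have "((\<lambda>r::real. v + r *\<^sub>R x) \<longlongrightarrow> v + 0 *\<^sub>R x) (at 0)"
    by (intro tvs_tendsto_add[OF assms(1)] tvs_tendsto_scaleR[OF assms(1)] tendsto_const tendsto_ident_at)
  with assms(2,3) show ?thesis
    by (simp add: tendsto_def)
qed

lemma symmetric_convex_nbhd_exists:
  fixes Z :: "'a::{real_vector,topological_space} set"
  assumes tvs: "tvs TYPE('a)" and lc: "locally_convex TYPE('a)" and Z: "open Z" "y \<in> Z"
  shows "\<exists>W. open W \<and> convex W \<and> 0 \<in> W \<and> (\<forall>x\<in>W. - x \<in> W) \<and> (\<forall>x\<in>W. y + c *\<^sub>R x \<in> Z)"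
proof -
  have open_vimage: "open ((\<lambda>x::'a. b + r *\<^sub>R x) -` B)" if "open B" for b r and B :: "'a set"
    using tvs_continuous_on_affine[OF tvs, of b r] that by (simp add: continuous_on_open_vimage[OF open_UNIV])
  have "0 \<in> (\<lambda>x::'a. y + c *\<^sub>R x) -` Z"
    using Z(2) by simp
  then obtain W0 where W0: "open W0" "convex W0" "0 \<in> W0" "W0 \<subseteq> (\<lambda>x::'a. y + c *\<^sub>R x) -` Z"
    using lc open_vimage[OF Z(1), of y c] unfolding locally_convex_def by blast
  have "(\<lambda>x. - x) ` W0 = (\<lambda>x::'a. 0 + (-1) *\<^sub>R x) -` W0"
    by force
  then have "open ((\<lambda>x. - x) ` W0)"
    using open_vimage[OF W0(1), of 0 "-1"] by (simp only:)
  moreover have "convex (W0 \<inter> (\<lambda>x. - x) ` W0)"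
    by (intro convex_Int convex_negations W0)
  moreover have "\<forall>x \<in> W0 \<inter> (\<lambda>x. - x) ` W0. - x \<in> W0 \<inter> (\<lambda>x. - x) ` W0"
    by (auto simp: image_def)
  ultimately show ?thesis
    using W0 by (intro exI[of _ "W0 \<inter> (\<lambda>x. - x) ` W0"]) (auto simp: open_Int)
qed

lemma convex_nbhd_sum_in_open:
  fixes S :: "'e::{real_vector,topological_space} set"
  assumes tvs: "tvs TYPE('e)" and lc: "locally_convex TYPE('e)" and S: "open S" "x0 \<in> S"
  shows "\<exists>V. open V \<and> convex V \<and> 0 \<in> V \<and> (\<forall>z1\<in>V. \<forall>z2\<in>V. x0 + (z1 + z2) \<in> S)"
proof -
  have "continuous_on UNIV (\<lambda>q::'e \<times> 'e. x0 + (fst q + snd q))"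
    unfolding continuous_on_def
    by (intro ballI tvs_tendsto_add[OF tvs] tendsto_const tendsto_fst tendsto_snd tendsto_ident_at)
  then have "open ((\<lambda>q::'e \<times> 'e. x0 + (fst q + snd q)) -` S)"
    using S(1) by (simp add: continuous_on_open_vimage[OF open_UNIV])
  moreover have "(0, 0) \<in> (\<lambda>q::'e \<times> 'e. x0 + (fst q + snd q)) -` S"
    using S(2) by simp
  ultimately obtain A B where AB: "open A" "open B" "(0, 0) \<in> A \<times> B"
      "A \<times> B \<subseteq> (\<lambda>q::'e \<times> 'e. x0 + (fst q + snd q)) -` S"
    by (rule open_prod_elim)
  obtain V where V: "open V" "convex V" "0 \<in> V" "V \<subseteq> A \<inter> B"
    using lc AB(1-3) unfolding locally_convex_def by (meson IntI mem_Sigma_iff open_Int)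
  have "x0 + (z1 + z2) \<in> S" if "z1 \<in> V" "z2 \<in> V" for z1 z2
  proof -
    have "(z1, z2) \<in> A \<times> B"
      using that V(4) by auto
    then show ?thesis
      using AB(4) by auto
  qed
  with V(1-3) show ?thesis
    by blast
qed

lemma tvs_tendsto_if_curve_deriv:
  fixes c :: "real \<Rightarrow> 'e::{real_vector,topological_space}"
  assumes tvs: "tvs TYPE('e)"
    and deriv: "((\<lambda>s. inverse (s - t) *\<^sub>R (c s - c t)) \<longlongrightarrow> c') (at t within S)"
  shows "(c \<longlongrightarrow> c t) (at t within S)"
proof -
  have "((\<lambda>s. s - t) \<longlongrightarrow> 0) (at t within S)"
    using tendsto_diff[OF tendsto_ident_at[of t S] tendsto_const[of t]] by simp
  from tvs_tendsto_scaleR[OF tvs this deriv]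
  have "((\<lambda>s. (s - t) *\<^sub>R (inverse (s - t) *\<^sub>R (c s - c t))) \<longlongrightarrow> 0) (at t within S)"
    by simp
  moreover have "eventually (\<lambda>s. (s - t) *\<^sub>R (inverse (s - t) *\<^sub>R (c s - c t)) = c s - c t)
      (at t within S)"
    by (auto simp: eventually_at_filter)
  ultimately have "((\<lambda>s. c s - c t) \<longlongrightarrow> 0) (at t within S)"
    by (rule Lim_transform_eventually)
  from tvs_tendsto_add[OF tvs this tendsto_const[of "c t"]] show ?thesis
    by simp
qed

lemma tendsto_at_shift_0:
  fixes f :: "real \<Rightarrow> 'b::topological_space"
  shows "((\<lambda>r. f (t + r)) \<longlongrightarrow> l) (at 0) \<longleftrightarrow> (f \<longlongrightarrow> l) (at t)"
  by (subst (2) at_to_0) (simp add: filterlim_filtermap add.commute)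

lemma eventually_at_shift_0:
  "eventually (\<lambda>r. P (t + r)) (at (0::real)) \<longleftrightarrow> eventually P (at t)"
  by (subst (2) at_to_0) (simp add: eventually_filtermap add.commute)

lemma dd_eqI: "(diffquot f v \<xi> \<longlongrightarrow> l) (at 0) \<Longrightarrow> dd f v \<xi> = l"
  unfolding dd_def by (rule tendsto_Lim) simp

lemma C1_tendsto_dd: "C1 U f \<Longrightarrow> v \<in> U \<Longrightarrow> (diffquot f v \<xi> \<longlongrightarrow> dd f v \<xi>) (at 0)"
  unfolding C1_def using dd_eqI by metis

lemma dd_scaleR:
  fixes f :: "'e::{real_vector,topological_space} \<Rightarrow> 'f::{real_vector,t2_space}"
  assumes tvs: "tvs TYPE('f)" and "C1 U f" "v \<in> U"
  shows "dd f v (c *\<^sub>R \<xi>) = c *\<^sub>R dd f v \<xi>"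
proof (cases "c = 0")
  case True
  then show ?thesis
    by (intro dd_eqI) (simp add: diffquot_def[abs_def])
next
  case False
  have "filterlim (\<lambda>s::real. c * s) (at 0) (at 0)"
    using False by (intro filterlim_atI) (auto intro!: tendsto_eq_intros simp: eventually_at_filter)
  from tvs_tendsto_scaleR[OF tvs tendsto_const filterlim_compose[OF C1_tendsto_dd[OF assms(2,3)] this]]
  have "((\<lambda>s. c *\<^sub>R diffquot f v \<xi> (c * s)) \<longlongrightarrow> c *\<^sub>R dd f v \<xi>) (at 0)" .
  moreover have "diffquot f v (c *\<^sub>R \<xi>) = (\<lambda>s. c *\<^sub>R diffquot f v \<xi> (c * s))"
    using False by (simp add: diffquot_def mult.commute fun_eq_iff)
  ultimately show ?thesis
    by (intro dd_eqI) simp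
qed

lemma dd_uminus:
  fixes f :: "'e::{real_vector,topological_space} \<Rightarrow> 'f::{real_vector,t2_space}"
  assumes "tvs TYPE('f)" "C1 U f" "v \<in> U"
  shows "dd f v (- \<xi>) = - dd f v \<xi>"
  using dd_scaleR[OF assms, of "-1" \<xi>] by simp

lemma C1_tendsto_line_deriv:
  assumes "C1 U \<Phi>" "b + t *\<^sub>R m \<in> U"
  shows "((\<lambda>r. inverse r *\<^sub>R (\<Phi> (b + (t + r) *\<^sub>R m) - \<Phi> (b + t *\<^sub>R m)))
           \<longlongrightarrow> dd \<Phi> (b + t *\<^sub>R m) m) (at 0)"
proof -
  have "(\<lambda>r. inverse r *\<^sub>R (\<Phi> (b + (t + r) *\<^sub>R m) - \<Phi> (b + t *\<^sub>R m))) = diffquot \<Phi> (b + t *\<^sub>R m) m"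
    by (simp add: fun_eq_iff diffquot_def scaleR_add_left add.assoc)
  with C1_tendsto_dd[OF assms] show ?thesis
    by simp
qed

definition second_diffquot :: "('a::real_vector \<Rightarrow> 'b::real_vector) \<Rightarrow> 'a \<Rightarrow> 'a \<Rightarrow> 'a \<Rightarrow> real \<Rightarrow> 'b" where
  "second_diffquot f v \<xi> \<eta> s =
     inverse (s * s) *\<^sub>R (f (v + s *\<^sub>R \<xi> + s *\<^sub>R \<eta>) - f (v + s *\<^sub>R \<xi>) - f (v + s *\<^sub>R \<eta>) + f v)"

lemma second_diffquot_commute: "second_diffquot f v \<xi> \<eta> = second_diffquot f v \<eta> \<xi>"
  by (simp add: fun_eq_iff second_diffquot_def algebra_simps)

lemma diffquot_const: "diffquot (\<lambda>_. c) v \<xi> = (\<lambda>_. 0)"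
  by (simp add: diffquot_def fun_eq_iff)

lemma dd_const: "dd (\<lambda>_. c::'f::{real_vector,t2_space}) v \<xi> = 0"
  by (rule dd_eqI) (simp add: diffquot_const)

lemma C1_const: "C1 U (\<lambda>_. c::'f::{real_vector,t2_space})"
  unfolding C1_def using tendsto_const[of 0 "at (0::real)"]
  by (auto simp: diffquot_const dd_const case_prod_beta)

lemma diffquot_slice: "diffquot (\<lambda>u. \<Phi> (u, e)) u \<xi> = diffquot \<Phi> (u, e) (\<xi>, 0)"
  by (simp add: fun_eq_iff diffquot_def)

lemma dd_slice: "dd (\<lambda>u. \<Phi> (u, e)) u \<xi> = dd \<Phi> (u, e) (\<xi>, 0)"
  by (simp add: dd_def diffquot_slice)

lemma C1_slice:
  fixes \<Phi> :: "'e::{real_vector,topological_space} \<times> 'g::{real_vector,topological_space} \<Rightarrow> 'f::{real_vector,t2_space}"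
  assumes "C1 (U \<times> UNIV) \<Phi>"
  shows "C1 U (\<lambda>u. \<Phi> (u, e))"
  unfolding C1_def
proof
  show "\<forall>v\<in>U. \<forall>\<xi>. \<exists>l. (diffquot (\<lambda>u. \<Phi> (u, e)) v \<xi> \<longlongrightarrow> l) (at 0)"
    using assms unfolding C1_def diffquot_slice by simp
  have "continuous_on (U \<times> UNIV) (\<lambda>q. (\<lambda>(v, \<xi>). dd \<Phi> v \<xi>) ((fst q, e), (snd q, 0)))"
    using assms unfolding C1_def
    by (rule continuous_on_compose2[OF conjunct2]) (auto intro!: continuous_intros)
  then show "continuous_on (U \<times> UNIV) (\<lambda>(v, \<xi>). dd (\<lambda>u. \<Phi> (u, e)) v \<xi>)"
    by (simp add: dd_slice case_prod_beta)
qed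

section \<open>A mean value inequality\<close>

lemma tvs_tendsto_if_diffquot_at_0:
  fixes h :: "real \<Rightarrow> 'a::{real_vector,topological_space}"
  assumes "tvs TYPE('a)" and deriv: "((\<lambda>r. inverse r *\<^sub>R (h (t + r) - h t)) \<longlongrightarrow> d) (at 0)"
  shows "(h \<longlongrightarrow> h t) (at t)"
proof (rule tvs_tendsto_if_curve_deriv[OF assms(1)])
  have "((\<lambda>r. (\<lambda>s. inverse (s - t) *\<^sub>R (h s - h t)) (t + r)) \<longlongrightarrow> d) (at 0)"
    using deriv by (simp only: add_diff_cancel_left')
  then show "((\<lambda>s. inverse (s - t) *\<^sub>R (h s - h t)) \<longlongrightarrow> d) (at t)"
    by (rule tendsto_at_shift_0[THEN iffD1])
qed

lemma continuous_right_nonincreasing_imp_le: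
  fixes \<psi> :: "real \<Rightarrow> real"
  assumes "a \<le> b" and cont: "continuous_on {a..b} \<psi>"
    and right: "\<And>t. t \<in> {a..<b} \<Longrightarrow> eventually (\<lambda>s. \<psi> s \<le> \<psi> t) (at_right t)"
  shows "\<psi> b \<le> \<psi> a"
proof (rule ccontr)
  assume "\<not> \<psi> b \<le> \<psi> a"
  define c where "c = (\<psi> a + \<psi> b) / 2"
  have c: "\<psi> a < c" "c < \<psi> b"
    using \<open>\<not> \<psi> b \<le> \<psi> a\<close> by (auto simp: c_def)
  define S where "S = {a..b} \<inter> \<psi> -` {..c}"
  have "closed S"
    unfolding S_def by (intro continuous_closed_preimage cont closed_atLeastAtMost closed_atMost)
  moreover have "a \<in> S" "bdd_above S"
    using \<open>a \<le> b\<close> c by (auto simp: S_def intro: bdd_aboveI[of _ b])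
  ultimately have "Sup S \<in> S"
    using closed_contains_Sup by blast
  then have m: "a \<le> Sup S" "Sup S < b" "\<psi> (Sup S) \<le> c"
    using c by (auto simp: S_def intro: le_neq_trans)
  then obtain d where d: "d > Sup S" "\<And>s. Sup S < s \<Longrightarrow> s < d \<Longrightarrow> \<psi> s \<le> \<psi> (Sup S)"
    using right[of "Sup S"] unfolding eventually_at_right[OF m(2)] by auto
  define s where "s = (Sup S + min d b) / 2"
  have "Sup S < s" "s < d" "s < b"
    using d m by (auto simp: s_def)
  with d(2) m have "s \<in> S"
    by (fastforce simp: S_def)
  then show False
    using cSup_upper[OF _ \<open>bdd_above S\<close>] \<open>Sup S < s\<close> by fastforce
qed

definition minkowski_gauge :: "'a::real_vector set \<Rightarrow> 'a \<Rightarrow> real" where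
  "minkowski_gauge W x = Inf {t. 0 < t \<and> inverse t *\<^sub>R x \<in> W}"

locale symmetric_convex_nbhd =
  fixes W :: "'a::{real_vector,t2_space} set"
  assumes tvs: "tvs TYPE('a)" and open_W: "open W" and convex_W: "convex W"
    and zero_in_W: "0 \<in> W" and uminus_in_W: "\<And>x. x \<in> W \<Longrightarrow> - x \<in> W"
begin

lemma eventually_at_right_0_scaleR_in_W:
  "eventually (\<lambda>r. 0 < r \<and> (c + r) *\<^sub>R x \<in> W) (at_right 0)" if "c *\<^sub>R x \<in> W"
proof -
  have "((\<lambda>r::real. (c + r) *\<^sub>R x) \<longlongrightarrow> (c + 0) *\<^sub>R x) (at_right 0)"
    by (intro tvs_tendsto_scaleR[OF tvs] tendsto_const tendsto_add tendsto_ident_at)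
  then have "eventually (\<lambda>r. (c + r) *\<^sub>R x \<in> W) (at_right 0)"
    using open_W that by (simp add: tendsto_def)
  then show ?thesis
    by (simp add: eventually_conj_iff eventually_at_right_less)
qed

lemma W_absorbing: "\<exists>t>0. inverse t *\<^sub>R x \<in> W"
proof -
  obtain r :: real where "0 < r" "r *\<^sub>R x \<in> W"
    using eventually_happens'[OF _ eventually_at_right_0_scaleR_in_W[of 0 x]] zero_in_W by auto
  then show ?thesis
    by (intro exI[of _ "inverse r"]) auto
qed

lemma gauge_set_nonempty: "{t. 0 < t \<and> inverse t *\<^sub>R x \<in> W} \<noteq> {}"
  using W_absorbing by auto

lemma gauge_set_bdd_below: "bdd_below {t. 0 < t \<and> inverse t *\<^sub>R x \<in> W}"
  by (rule bdd_belowI[of _ 0]) auto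

lemma minkowski_gauge_nonneg: "0 \<le> minkowski_gauge W x"
  unfolding minkowski_gauge_def by (rule cInf_greatest[OF gauge_set_nonempty]) auto

lemma inverse_scaleR_in_W_mono:
  assumes "0 < t" "t \<le> t'" "inverse t *\<^sub>R x \<in> W"
  shows "inverse t' *\<^sub>R x \<in> W"
proof -
  have "(t / t') *\<^sub>R (inverse t *\<^sub>R x) + (1 - t / t') *\<^sub>R 0 \<in> W"
    using assms by (intro convexD[OF convex_W] zero_in_W) auto
  moreover have "t / t' * inverse t = inverse t'"
    using assms by (simp add: field_simps)
  ultimately show ?thesis
    by (simp only: scaleR_zero_right add_0_right scaleR_scaleR)
qed

lemma inverse_scaleR_in_W_if_gauge_less:
  assumes "minkowski_gauge W x < r" "0 < r"
  shows "inverse r *\<^sub>R x \<in> W"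
proof -
  obtain t where "0 < t" "inverse t *\<^sub>R x \<in> W" "t < r"
    using assms(1) unfolding minkowski_gauge_def cInf_less_iff[OF gauge_set_nonempty gauge_set_bdd_below]
    by auto
  then show ?thesis
    using inverse_scaleR_in_W_mono[of t r x] by auto
qed

lemma gauge_less_if_inverse_scaleR_in_W:
  assumes "inverse r *\<^sub>R x \<in> W" "0 < r"
  shows "minkowski_gauge W x < r"
proof -
  obtain d :: real where d: "0 < d" "(1 + d) *\<^sub>R (inverse r *\<^sub>R x) \<in> W"
    using eventually_happens'[OF _ eventually_at_right_0_scaleR_in_W[of 1 "inverse r *\<^sub>R x"]] assms
    by auto
  have "inverse (r / (1 + d)) *\<^sub>R x = (1 + d) *\<^sub>R (inverse r *\<^sub>R x)"
    using d assms by (simp add: field_simps)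
  then have "minkowski_gauge W x \<le> r / (1 + d)"
    unfolding minkowski_gauge_def using d assms by (intro cInf_lower[OF _ gauge_set_bdd_below]) auto
  also have "\<dots> < r"
    using d assms by (simp add: field_simps)
  finally show ?thesis .
qed

lemma minkowski_gauge_triangle:
  "minkowski_gauge W (x + y) \<le> minkowski_gauge W x + minkowski_gauge W y"
proof (rule field_le_epsilon)
  fix e :: real
  assume "0 < e"
  define a where "a = minkowski_gauge W x + e / 2"
  define b where "b = minkowski_gauge W y + e / 2"
  have a: "0 < a" "inverse a *\<^sub>R x \<in> W" and b: "0 < b" "inverse b *\<^sub>R y \<in> W"
    using \<open>0 < e\<close> minkowski_gauge_nonneg[of x] minkowski_gauge_nonneg[of y]
      inverse_scaleR_in_W_if_gauge_less[of x a] inverse_scaleR_in_W_if_gauge_less[of y b]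
    by (auto simp: a_def b_def)
  have "(a / (a + b)) *\<^sub>R (inverse a *\<^sub>R x) + (b / (a + b)) *\<^sub>R (inverse b *\<^sub>R y) \<in> W"
    using a b by (intro convexD[OF convex_W]) (auto simp: add_divide_distrib[symmetric])
  moreover have "a / (a + b) * inverse a = inverse (a + b)" "b / (a + b) * inverse b = inverse (a + b)"
    using a b by (simp_all add: field_simps)
  ultimately have "inverse (a + b) *\<^sub>R (x + y) \<in> W"
    by (simp only: scaleR_scaleR scaleR_right_distrib)
  then have "minkowski_gauge W (x + y) < a + b"
    using a b by (intro gauge_less_if_inverse_scaleR_in_W) auto
  then show "minkowski_gauge W (x + y) \<le> minkowski_gauge W x + minkowski_gauge W y + e"
    by (simp add: a_def b_def)
qed

lemma minkowski_gauge_uminus: "minkowski_gauge W (- x) = minkowski_gauge W x"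
proof -
  have "- z \<in> W \<longleftrightarrow> z \<in> W" for z
    using uminus_in_W[of z] uminus_in_W[of "- z"] by auto
  then show ?thesis
    by (simp add: minkowski_gauge_def)
qed

lemma minkowski_gauge_dist_tendsto:
  assumes "(h \<longlongrightarrow> h t) (at t)"
  shows "((\<lambda>s. minkowski_gauge W (h s - c)) \<longlongrightarrow> minkowski_gauge W (h t - c)) (at t)"
  unfolding tendsto_iff
proof (intro allI impI)
  fix e :: real
  assume "0 < e"
  have "((\<lambda>s. inverse e *\<^sub>R (h s - h t)) \<longlongrightarrow> inverse e *\<^sub>R (h t - h t)) (at t)"
    by (intro tvs_tendsto_scaleR[OF tvs] tvs_tendsto_diff[OF tvs] assms tendsto_const)
  then have "eventually (\<lambda>s. inverse e *\<^sub>R (h s - h t) \<in> W) (at t)"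
    using open_W zero_in_W by (simp add: tendsto_def)
  then show "eventually (\<lambda>s. dist (minkowski_gauge W (h s - c)) (minkowski_gauge W (h t - c)) < e) (at t)"
  proof (rule eventually_mono)
    fix s
    assume "inverse e *\<^sub>R (h s - h t) \<in> W"
    then have "minkowski_gauge W (h s - h t) < e" "minkowski_gauge W (h t - h s) < e"
      using \<open>0 < e\<close> gauge_less_if_inverse_scaleR_in_W minkowski_gauge_uminus[of "h s - h t"] by auto
    then show "dist (minkowski_gauge W (h s - c)) (minkowski_gauge W (h t - c)) < e"
      using minkowski_gauge_triangle[of "h s - h t" "h t - c"] minkowski_gauge_triangle[of "h t - h s" "h s - c"]
      by (simp add: dist_real_def abs_less_iff)
  qed
qed

lemma eventually_at_right_gauge_increment_less:
  assumes "((\<lambda>r. inverse r *\<^sub>R (h (t + r) - h t)) \<longlongrightarrow> d) (at 0)" "d \<in> W"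
  shows "eventually (\<lambda>s. minkowski_gauge W (h s - h t) < s - t) (at_right t)"
proof -
  have "eventually (\<lambda>r. inverse r *\<^sub>R (h (t + r) - h t) \<in> W) (at 0)"
    using assms open_W by (simp add: tendsto_def)
  then have "eventually (\<lambda>s. inverse (s - t) *\<^sub>R (h s - h t) \<in> W) (at t)"
    by (subst eventually_at_shift_0[symmetric]) simp
  moreover have "at_right t \<le> at t"
    by (rule at_le) simp
  ultimately have "eventually (\<lambda>s. inverse (s - t) *\<^sub>R (h s - h t) \<in> W) (at_right t)"
    by (simp add: filter_leD)
  then have "eventually (\<lambda>s. inverse (s - t) *\<^sub>R (h s - h t) \<in> W \<and> t < s) (at_right t)"
    by (simp add: eventually_conj_iff eventually_at_right_less)
  then show ?thesis
    by eventually_elim (auto intro: gauge_less_if_inverse_scaleR_in_W)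
qed

text \<open>With \<open>p\<close> the gauge of \<open>W\<close>, the function \<open>s \<mapsto> p (h s - h 0) - s\<close> is locally
  non-increasing to the right, so \<open>p (h 1 - h 0) \<le> 1 + p 0 < 2\<close>.\<close>

lemma mean_value_in_W:
  fixes h h' :: "real \<Rightarrow> 'a"
  assumes deriv: "\<And>t. t \<in> {0..1} \<Longrightarrow> ((\<lambda>r. inverse r *\<^sub>R (h (t + r) - h t)) \<longlongrightarrow> h' t) (at 0)"
    and deriv_in_W: "\<And>t. t \<in> {0..1} \<Longrightarrow> h' t \<in> W"
  shows "\<exists>x\<in>W. h 1 - h 0 = 2 *\<^sub>R x"
proof -
  define \<psi> where "\<psi> s = minkowski_gauge W (h s - h 0) - s" for s
  have "isCont \<psi> t" if "t \<in> {0..1}" for t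
    unfolding isCont_def \<psi>_def
    by (intro tendsto_diff minkowski_gauge_dist_tendsto tendsto_ident_at
        tvs_tendsto_if_diffquot_at_0[OF tvs deriv[OF that]])
  then have cont: "continuous_on {0..1} \<psi>"
    by (simp add: continuous_at_imp_continuous_on)
  have right: "eventually (\<lambda>s. \<psi> s \<le> \<psi> t) (at_right t)" if "t \<in> {0..<1}" for t
  proof -
    from that have "t \<in> {0..1}"
      by simp
    from eventually_at_right_gauge_increment_less[OF deriv[OF this] deriv_in_W[OF this]]
    show ?thesis
    proof eventually_elim
      case (elim s)
      then show ?case
        using minkowski_gauge_triangle[of "h s - h t" "h t - h 0"] by (simp add: \<psi>_def)
    qed
  qed
  have "\<psi> 1 \<le> \<psi> 0"
    by (rule continuous_right_nonincreasing_imp_le[OF _ cont right]) simp_all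
  moreover have "minkowski_gauge W (h 0 - h 0) < 1"
    using zero_in_W by (intro gauge_less_if_inverse_scaleR_in_W) simp_all
  ultimately have "inverse 2 *\<^sub>R (h 1 - h 0) \<in> W"
    by (intro inverse_scaleR_in_W_if_gauge_less) (auto simp: \<psi>_def)
  then show ?thesis
    by (intro bexI[of _ "inverse 2 *\<^sub>R (h 1 - h 0)"]) auto
qed

lemma mean_value_near:
  fixes h h' :: "real \<Rightarrow> 'a"
  assumes deriv: "\<And>t. t \<in> {0..1} \<Longrightarrow> ((\<lambda>r. inverse r *\<^sub>R (h (t + r) - h t)) \<longlongrightarrow> h' t) (at 0)"
    and near: "\<And>t. t \<in> {0..1} \<Longrightarrow> h' t - l \<in> W"
  shows "\<exists>x\<in>W. h 1 - h 0 = l + 2 *\<^sub>R x"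
proof -
  have "((\<lambda>r. inverse r *\<^sub>R ((h (t + r) - (t + r) *\<^sub>R l) - (h t - t *\<^sub>R l))) \<longlongrightarrow> h' t - l) (at 0)"
    if "t \<in> {0..1}" for t
  proof -
    have "eventually (\<lambda>r. inverse r *\<^sub>R (h (t + r) - h t) - l
        = inverse r *\<^sub>R ((h (t + r) - (t + r) *\<^sub>R l) - (h t - t *\<^sub>R l))) (at 0)"
      by (auto simp: eventually_at_filter algebra_simps)
    with tvs_tendsto_diff[OF tvs deriv[OF that] tendsto_const[of l]] show ?thesis
      by (rule Lim_transform_eventually)
  qed
  from mean_value_in_W[OF this near] show ?thesis
    by (auto simp: algebra_simps)
qed

lemma segment_diffquot_near:
  fixes \<Phi> :: "'e::{real_vector,topological_space} \<Rightarrow> 'a"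
  assumes C1: "C1 U \<Phi>" and "s \<noteq> 0"
    and segment: "\<And>t. t \<in> {0..1} \<Longrightarrow> b + t *\<^sub>R (s *\<^sub>R k) \<in> U \<and> dd \<Phi> (b + t *\<^sub>R (s *\<^sub>R k)) k - l \<in> W"
  shows "\<exists>x\<in>W. inverse s *\<^sub>R (\<Phi> (b + s *\<^sub>R k) - \<Phi> b) = l + 2 *\<^sub>R x"
proof -
  define m where "m = s *\<^sub>R k"
  have "((\<lambda>r. inverse r *\<^sub>R (inverse s *\<^sub>R \<Phi> (b + (t + r) *\<^sub>R m) - inverse s *\<^sub>R \<Phi> (b + t *\<^sub>R m)))
          \<longlongrightarrow> dd \<Phi> (b + t *\<^sub>R m) k) (at 0)" if "t \<in> {0..1}" for t
  proof -
    have "b + t *\<^sub>R m \<in> U"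
      using segment[OF that] by (simp add: m_def)
    from tvs_tendsto_scaleR[OF tvs tendsto_const[of "inverse s"] C1_tendsto_line_deriv[OF C1 this]]
    show ?thesis
      using \<open>s \<noteq> 0\<close> dd_scaleR[OF tvs C1 \<open>b + t *\<^sub>R m \<in> U\<close>, of s k]
      by (simp add: m_def scaleR_diff_right ac_simps)
  qed
  from mean_value_near[OF this] segment show ?thesis
    by (simp add: m_def scaleR_diff_right)
qed

lemma second_diffquot_near:
  fixes F :: "'e::{real_vector,topological_space} \<Rightarrow> 'a"
  assumes C1: "C1 U F" and "s \<noteq> 0"
    and segment: "\<And>\<tau>. \<tau> \<in> {0..1} \<Longrightarrow> w + \<tau> *\<^sub>R (s *\<^sub>R \<eta>) \<in> U \<and> w + s *\<^sub>R \<xi> + \<tau> *\<^sub>R (s *\<^sub>R \<eta>) \<in> U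
        \<and> inverse s *\<^sub>R (dd F (w + s *\<^sub>R \<xi> + \<tau> *\<^sub>R (s *\<^sub>R \<eta>)) \<eta> - dd F (w + \<tau> *\<^sub>R (s *\<^sub>R \<eta>)) \<eta>) - D \<in> W"
  shows "\<exists>x\<in>W. second_diffquot F w \<xi> \<eta> s = D + 2 *\<^sub>R x"
proof -
  define m where "m = s *\<^sub>R \<eta>"
  define h where "h \<tau> = inverse (s * s) *\<^sub>R (F (w + s *\<^sub>R \<xi> + \<tau> *\<^sub>R m) - F (w + \<tau> *\<^sub>R m))" for \<tau>
  have "((\<lambda>r. inverse r *\<^sub>R (h (\<tau> + r) - h \<tau>))
      \<longlongrightarrow> inverse s *\<^sub>R (dd F (w + s *\<^sub>R \<xi> + \<tau> *\<^sub>R m) \<eta> - dd F (w + \<tau> *\<^sub>R m) \<eta>)) (at 0)"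
    if "\<tau> \<in> {0..1}" for \<tau>
  proof -
    have U: "w + \<tau> *\<^sub>R m \<in> U" "w + s *\<^sub>R \<xi> + \<tau> *\<^sub>R m \<in> U"
      using segment[OF that] by (simp_all add: m_def)
    from tvs_tendsto_scaleR[OF tvs tendsto_const[of "inverse (s * s)"]
        tvs_tendsto_diff[OF tvs C1_tendsto_line_deriv[OF C1 U(2)] C1_tendsto_line_deriv[OF C1 U(1)]]]
    have "((\<lambda>r. inverse r *\<^sub>R (h (\<tau> + r) - h \<tau>))
        \<longlongrightarrow> inverse (s * s) *\<^sub>R (dd F (w + s *\<^sub>R \<xi> + \<tau> *\<^sub>R m) m - dd F (w + \<tau> *\<^sub>R m) m)) (at 0)"
      by (simp add: h_def algebra_simps)
    moreover have "inverse (s * s) *\<^sub>R (dd F (w + s *\<^sub>R \<xi> + \<tau> *\<^sub>R m) m - dd F (w + \<tau> *\<^sub>R m) m)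
        = inverse s *\<^sub>R (dd F (w + s *\<^sub>R \<xi> + \<tau> *\<^sub>R m) \<eta> - dd F (w + \<tau> *\<^sub>R m) \<eta>)"
      using \<open>s \<noteq> 0\<close> dd_scaleR[OF tvs C1 U(1), of s \<eta>] dd_scaleR[OF tvs C1 U(2), of s \<eta>]
      by (simp add: m_def scaleR_diff_right field_simps)
    ultimately show ?thesis
      by simp
  qed
  from mean_value_near[OF this] segment
  obtain x where "x \<in> W" "h 1 - h 0 = D + 2 *\<^sub>R x"
    by (auto simp: m_def)
  moreover have "h 1 - h 0 = second_diffquot F w \<xi> \<eta> s"
    by (simp add: h_def m_def second_diffquot_def algebra_simps)
  ultimately show ?thesis
    by auto
qed

end

section \<open>Calculus of \<open>C1\<close> maps\<close>

lemma C1_dd_near_uniformly: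
  fixes \<Phi> :: "'e::{real_vector,t2_space} \<Rightarrow> 'f::{real_vector,t2_space}"
  assumes tvsE: "tvs TYPE('e)" and lcE: "locally_convex TYPE('e)" and tvsF: "tvs TYPE('f)"
    and U: "open U" and C1: "C1 U \<Phi>" and x0: "x0 \<in> U" and W: "open W" "0 \<in> W"
  obtains V P where "open V" "convex V" "0 \<in> V" "eventually P (nhds k0)"
    "\<And>z1 z2 k. z1 \<in> V \<Longrightarrow> z2 \<in> V \<Longrightarrow> P k \<Longrightarrow>
       x0 + (z1 + z2) \<in> U \<and> dd \<Phi> (x0 + (z1 + z2)) k - dd \<Phi> x0 k0 \<in> W"
proof -
  define l where "l = dd \<Phi> x0 k0"
  have "isCont (\<lambda>(v, \<xi>). dd \<Phi> v \<xi>) (x0, k0)"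
    using C1 U x0 unfolding C1_def by (simp add: continuous_on_eq_continuous_at open_Times)
  then have "((\<lambda>q. (\<lambda>(v, \<xi>). dd \<Phi> v \<xi>) q - l) \<longlongrightarrow> l - l) (nhds (x0, k0))"
    unfolding l_def isCont_def tendsto_at_iff_tendsto_nhds
    by (intro tvs_tendsto_diff[OF tvsF] tendsto_const) simp
  then have "eventually (\<lambda>q. (\<lambda>(v, \<xi>). dd \<Phi> v \<xi>) q - l \<in> W) (nhds (x0, k0))"
    using W by (simp add: tendsto_def)
  moreover have "eventually (\<lambda>q. q \<in> U \<times> UNIV) (nhds (x0, k0))"
    using U x0 by (intro eventually_nhds_in_open) (auto simp: open_Times)
  ultimately have "eventually (\<lambda>q. fst q \<in> U \<and> dd \<Phi> (fst q) (snd q) - l \<in> W) (nhds x0 \<times>\<^sub>F nhds k0)"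
    unfolding nhds_prod[symmetric] by eventually_elim (auto simp: case_prod_beta)
  then obtain P1 P where P: "eventually P1 (nhds x0)" "eventually P (nhds k0)"
      "\<And>x k. P1 x \<Longrightarrow> P k \<Longrightarrow> x \<in> U \<and> dd \<Phi> x k - l \<in> W"
    unfolding eventually_prod_filter by auto
  obtain S where "open S" "x0 \<in> S" "\<And>x. x \<in> S \<Longrightarrow> P1 x"
    using P(1) unfolding eventually_nhds by blast
  with convex_nbhd_sum_in_open[OF tvsE lcE] obtain V where "open V" "convex V" "0 \<in> V"
      "\<And>z1 z2. z1 \<in> V \<Longrightarrow> z2 \<in> V \<Longrightarrow> P1 (x0 + (z1 + z2))"
    by metis
  with P(2,3) that show ?thesis
    unfolding l_def by blast
qed

text \<open>On the segment from \<open>a i\<close> to \<open>a i + \<sigma> i k i\<close> the derivative \<open>d\<Phi>(\<cdot>, k i)\<close> stays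
  close to \<open>d\<Phi>(x0, k0)\<close> by joint continuity, so the mean value inequality applies.\<close>

lemma C1_tendsto_diffquot_moving:
  fixes \<Phi> :: "'e::{real_vector,t2_space} \<Rightarrow> 'f::{real_vector,t2_space}"
    and a k :: "'i \<Rightarrow> 'e" and \<sigma> :: "'i \<Rightarrow> real"
  assumes tvsE: "tvs TYPE('e)" and lcE: "locally_convex TYPE('e)"
    and tvsF: "tvs TYPE('f)" and lcF: "locally_convex TYPE('f)"
    and U: "open U" and C1: "C1 U \<Phi>" and x0: "x0 \<in> U"
    and a: "(a \<longlongrightarrow> x0) F" and k: "(k \<longlongrightarrow> k0) F" and \<sigma>: "(\<sigma> \<longlongrightarrow> 0) F"
    and \<sigma>_nz: "eventually (\<lambda>i. \<sigma> i \<noteq> 0) F"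
  shows "((\<lambda>i. inverse (\<sigma> i) *\<^sub>R (\<Phi> (a i + \<sigma> i *\<^sub>R k i) - \<Phi> (a i))) \<longlongrightarrow> dd \<Phi> x0 k0) F"
proof (rule topological_tendstoI)
  fix Z
  assume "open Z" "dd \<Phi> x0 k0 \<in> Z"
  then obtain W where W: "open W" "convex W" "0 \<in> W" "\<forall>x\<in>W. - x \<in> W"
      "\<forall>x\<in>W. dd \<Phi> x0 k0 + 2 *\<^sub>R x \<in> Z"
    using symmetric_convex_nbhd_exists[OF tvsF lcF] by blast
  interpret symmetric_convex_nbhd W
    using tvsF W by unfold_locales auto
  obtain V P where V: "open V" "convex V" "0 \<in> V" and P: "eventually P (nhds k0)"
    and near: "\<And>z1 z2 k. z1 \<in> V \<Longrightarrow> z2 \<in> V \<Longrightarrow> P k \<Longrightarrow>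
       x0 + (z1 + z2) \<in> U \<and> dd \<Phi> (x0 + (z1 + z2)) k - dd \<Phi> x0 k0 \<in> W"
    using C1_dd_near_uniformly[OF tvsE lcE tvsF U C1 x0 W(1,3)] by blast
  have "eventually (\<lambda>i. a i - x0 \<in> V) F"
    using tvs_tendsto_diff[OF tvsE a tendsto_const[of x0]] V by (simp add: tendsto_def)
  moreover have "eventually (\<lambda>i. \<sigma> i *\<^sub>R k i \<in> V) F"
    using tvs_tendsto_scaleR[OF tvsE \<sigma> k] V by (simp add: tendsto_def)
  moreover have "eventually (\<lambda>i. P (k i)) F"
    using k P unfolding filterlim_iff by blast
  ultimately show "eventually (\<lambda>i. inverse (\<sigma> i) *\<^sub>R (\<Phi> (a i + \<sigma> i *\<^sub>R k i) - \<Phi> (a i)) \<in> Z) F"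
    using \<sigma>_nz
  proof eventually_elim
    case (elim i)
    have "a i + t *\<^sub>R (\<sigma> i *\<^sub>R k i) \<in> U
        \<and> dd \<Phi> (a i + t *\<^sub>R (\<sigma> i *\<^sub>R k i)) (k i) - dd \<Phi> x0 k0 \<in> W"
      if "t \<in> {0..1}" for t
    proof -
      have "t *\<^sub>R (\<sigma> i *\<^sub>R k i) \<in> V"
        using convex_scaleR_mem[OF V(2,3) _ that] elim by blast
      with near[of "a i - x0" "t *\<^sub>R (\<sigma> i *\<^sub>R k i)" "k i"] elim show ?thesis
        by simp
    qed
    then obtain x where "x \<in> W" "inverse (\<sigma> i) *\<^sub>R (\<Phi> (a i + \<sigma> i *\<^sub>R k i) - \<Phi> (a i)) = dd \<Phi> x0 k0 + 2 *\<^sub>R x"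
      using segment_diffquot_near[OF C1 \<open>\<sigma> i \<noteq> 0\<close>] by blast
    with W(5) show ?case
      by simp
  qed
qed

lemma C1_tendsto_curve_compose:
  fixes \<Phi> :: "'e::{real_vector,t2_space} \<Rightarrow> 'f::{real_vector,t2_space}" and c :: "real \<Rightarrow> 'e"
  assumes tvsE: "tvs TYPE('e)" and lcE: "locally_convex TYPE('e)"
    and tvsF: "tvs TYPE('f)" and lcF: "locally_convex TYPE('f)"
    and "open U" "C1 U \<Phi>" "c t \<in> U"
    and deriv: "((\<lambda>s. inverse (s - t) *\<^sub>R (c s - c t)) \<longlongrightarrow> c') (at t within S)"
  shows "((\<lambda>s. inverse (s - t) *\<^sub>R (\<Phi> (c s) - \<Phi> (c t))) \<longlongrightarrow> dd \<Phi> (c t) c') (at t within S)"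
proof -
  have nz: "eventually (\<lambda>s. s - t \<noteq> 0) (at t within S)"
    by (simp add: eventually_at_filter)
  have "((\<lambda>s. s - t) \<longlongrightarrow> 0) (at t within S)"
    using tendsto_diff[OF tendsto_ident_at[of t S] tendsto_const[of t]] by simp
  from C1_tendsto_diffquot_moving[OF assms(1-7) tendsto_const deriv this nz]
  have "((\<lambda>s. inverse (s - t) *\<^sub>R (\<Phi> (c t + (s - t) *\<^sub>R (inverse (s - t) *\<^sub>R (c s - c t))) - \<Phi> (c t)))
      \<longlongrightarrow> dd \<Phi> (c t) c') (at t within S)" .
  moreover have "eventually (\<lambda>s. inverse (s - t) *\<^sub>R (\<Phi> (c t + (s - t) *\<^sub>R (inverse (s - t) *\<^sub>R (c s - c t))) - \<Phi> (c t))
      = inverse (s - t) *\<^sub>R (\<Phi> (c s) - \<Phi> (c t))) (at t within S)"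
    using nz by eventually_elim simp
  ultimately show ?thesis
    by (rule Lim_transform_eventually)
qed

lemma C1_tendsto_diffquot_compose:
  fixes \<Phi> :: "'e::{real_vector,t2_space} \<Rightarrow> 'f::{real_vector,t2_space}" and \<psi> :: "'g::real_vector \<Rightarrow> 'e"
  assumes tvsE: "tvs TYPE('e)" and lcE: "locally_convex TYPE('e)"
    and tvsF: "tvs TYPE('f)" and lcF: "locally_convex TYPE('f)"
    and "open U" "C1 U \<Phi>" "\<psi> w \<in> U" and deriv: "(diffquot \<psi> w \<xi> \<longlongrightarrow> l) (at 0)"
  shows "(diffquot (\<lambda>u. \<Phi> (\<psi> u)) w \<xi> \<longlongrightarrow> dd \<Phi> (\<psi> w) l) (at 0)"
proof -
  have "((\<lambda>r. inverse (r - 0) *\<^sub>R (\<psi> (w + r *\<^sub>R \<xi>) - \<psi> (w + 0 *\<^sub>R \<xi>))) \<longlongrightarrow> l) (at 0 within UNIV)"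
    using deriv by (simp add: diffquot_def[abs_def])
  from C1_tendsto_curve_compose[OF assms(1-6) _ this] \<open>\<psi> w \<in> U\<close> show ?thesis
    by (simp add: diffquot_def[abs_def])
qed

lemma dd_add:
  fixes \<Phi> :: "'e::{real_vector,t2_space} \<Rightarrow> 'f::{real_vector,t2_space}"
  assumes tvsE: "tvs TYPE('e)" and lcE: "locally_convex TYPE('e)"
    and tvsF: "tvs TYPE('f)" and lcF: "locally_convex TYPE('f)"
    and U: "open U" and C1: "C1 U \<Phi>" and v: "v \<in> U"
  shows "dd \<Phi> v (\<xi> + \<eta>) = dd \<Phi> v \<xi> + dd \<Phi> v \<eta>"
proof (rule dd_eqI)
  have "((\<lambda>r::real. v + r *\<^sub>R \<xi>) \<longlongrightarrow> v + 0 *\<^sub>R \<xi>) (at 0)"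
    by (intro tvs_tendsto_add[OF tvsE] tvs_tendsto_scaleR[OF tvsE] tendsto_const tendsto_ident_at)
  then have "((\<lambda>r::real. v + r *\<^sub>R \<xi>) \<longlongrightarrow> v) (at 0)"
    by simp
  from C1_tendsto_diffquot_moving[OF assms(1-7) this tendsto_const[of \<eta>] tendsto_ident_at]
  have "((\<lambda>r. inverse r *\<^sub>R (\<Phi> (v + r *\<^sub>R \<xi> + r *\<^sub>R \<eta>) - \<Phi> (v + r *\<^sub>R \<xi>))) \<longlongrightarrow> dd \<Phi> v \<eta>) (at 0)"
    by (simp add: eventually_at_filter)
  from tvs_tendsto_add[OF tvsF C1_tendsto_dd[OF C1 v] this]
  have "((\<lambda>r. diffquot \<Phi> v \<xi> r + inverse r *\<^sub>R (\<Phi> (v + r *\<^sub>R \<xi> + r *\<^sub>R \<eta>) - \<Phi> (v + r *\<^sub>R \<xi>)))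
      \<longlongrightarrow> dd \<Phi> v \<xi> + dd \<Phi> v \<eta>) (at 0)" .
  moreover have "(\<lambda>r. diffquot \<Phi> v \<xi> r + inverse r *\<^sub>R (\<Phi> (v + r *\<^sub>R \<xi> + r *\<^sub>R \<eta>) - \<Phi> (v + r *\<^sub>R \<xi>)))
      = diffquot \<Phi> v (\<xi> + \<eta>)"
    by (simp add: fun_eq_iff diffquot_def scaleR_add_right add.assoc scaleR_diff_right)
  ultimately show "(diffquot \<Phi> v (\<xi> + \<eta>) \<longlongrightarrow> dd \<Phi> v \<xi> + dd \<Phi> v \<eta>) (at 0)"
    by simp
qed

lemma eventually_prod_principal_uniform:
  assumes "eventually P (A \<times>\<^sub>F principal S)"
  shows "eventually (\<lambda>s. \<forall>\<tau>\<in>S. P (s, \<tau>)) A"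
  using assms unfolding eventually_prod_filter eventually_principal by (auto elim: eventually_mono)

lemma tendsto_mult_unit_interval:
  "((\<lambda>i::real \<times> real. snd i * fst i) \<longlongrightarrow> 0) (at 0 \<times>\<^sub>F principal {0..1})"
proof (rule Lim_null_comparison)
  show "eventually (\<lambda>i. norm (snd i * fst i) \<le> \<bar>fst i\<bar>) (at 0 \<times>\<^sub>F principal {0..1})"
    unfolding eventually_prod_filter eventually_principal
    by (intro exI[of _ "\<lambda>_. True"] exI[of _ "\<lambda>\<tau>. \<tau> \<in> {0..1}"])
      (auto simp: abs_mult intro: mult_left_le_one_le)
  have "((\<lambda>i. fst i) \<longlongrightarrow> 0) (at (0::real) \<times>\<^sub>F principal {0..1::real})"
    by (rule filterlim_compose[OF tendsto_ident_at filterlim_fst])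
  from tendsto_rabs[OF this]
  show "((\<lambda>i. \<bar>fst i\<bar>) \<longlongrightarrow> 0) (at (0::real) \<times>\<^sub>F principal {0..1::real})"
    by simp
qed

lemma C1_diffquot_near_uniformly:
  fixes \<Psi> :: "'e::{real_vector,t2_space} \<Rightarrow> 'f::{real_vector,t2_space}"
  assumes tvsE: "tvs TYPE('e)" and lcE: "locally_convex TYPE('e)"
    and tvsF: "tvs TYPE('f)" and lcF: "locally_convex TYPE('f)"
    and U: "open U" and C1: "C1 U \<Psi>" and w: "w \<in> U" and W: "open W" "0 \<in> W"
  shows "eventually (\<lambda>s. \<forall>\<tau>\<in>{0..1}. w + \<tau> *\<^sub>R (s *\<^sub>R \<eta>) \<in> U \<and> w + s *\<^sub>R \<xi> + \<tau> *\<^sub>R (s *\<^sub>R \<eta>) \<in> U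
      \<and> inverse s *\<^sub>R (\<Psi> (w + s *\<^sub>R \<xi> + \<tau> *\<^sub>R (s *\<^sub>R \<eta>)) - \<Psi> (w + \<tau> *\<^sub>R (s *\<^sub>R \<eta>)))
        - dd \<Psi> w \<xi> \<in> W) (at 0)"
proof -
  define G where "G = at (0::real) \<times>\<^sub>F principal {0..1::real}"
  define a where "a i = w + snd i *\<^sub>R (fst i *\<^sub>R \<eta>)" for i :: "real \<times> real"
  have fst: "((\<lambda>i. fst i) \<longlongrightarrow> 0) G"
    unfolding G_def by (rule filterlim_compose[OF tendsto_ident_at filterlim_fst])
  have "((\<lambda>i. w + (snd i * fst i) *\<^sub>R \<eta>) \<longlongrightarrow> w + 0 *\<^sub>R \<eta>) G"
    unfolding G_def
    by (intro tvs_tendsto_add[OF tvsE] tvs_tendsto_scaleR[OF tvsE] tendsto_const tendsto_mult_unit_interval)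
  then have a: "(a \<longlongrightarrow> w) G"
    by (simp add: a_def[abs_def])
  have "((\<lambda>i. a i + fst i *\<^sub>R \<xi>) \<longlongrightarrow> w + 0 *\<^sub>R \<xi>) G"
    by (intro tvs_tendsto_add[OF tvsE] tvs_tendsto_scaleR[OF tvsE] a fst tendsto_const)
  then have a_shift: "((\<lambda>i. a i + fst i *\<^sub>R \<xi>) \<longlongrightarrow> w) G"
    by simp
  have "eventually (\<lambda>s::real. s \<noteq> 0) (at 0)"
    by (simp add: eventually_at_filter)
  then have fst_nz: "eventually (\<lambda>i. fst i \<noteq> 0) G"
    unfolding G_def by (rule filterlim_iff[THEN iffD1, OF filterlim_fst, rule_format])
  have "((\<lambda>i. inverse (fst i) *\<^sub>R (\<Psi> (a i + fst i *\<^sub>R \<xi>) - \<Psi> (a i)) - dd \<Psi> w \<xi>)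
      \<longlongrightarrow> dd \<Psi> w \<xi> - dd \<Psi> w \<xi>) G"
    by (intro tvs_tendsto_diff[OF tvsF] tendsto_const
        C1_tendsto_diffquot_moving[OF tvsE lcE tvsF lcF U C1 w a tendsto_const fst fst_nz])
  then have "eventually (\<lambda>i. a i \<in> U \<and> a i + fst i *\<^sub>R \<xi> \<in> U
      \<and> inverse (fst i) *\<^sub>R (\<Psi> (a i + fst i *\<^sub>R \<xi>) - \<Psi> (a i)) - dd \<Psi> w \<xi> \<in> W) G"
    using a a_shift U w W by (simp add: tendsto_def eventually_conj_iff)
  then show ?thesis
    unfolding G_def by (rule eventually_prod_principal_uniform[THEN eventually_mono]) (simp add: a_def ac_simps)
qed

text \<open>Schwarz: the second difference quotient is symmetric in \<open>\<xi>, \<eta>\<close>, and it converges to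
  \<open>d(dF(\<cdot>, \<eta>))(w, \<xi>)\<close> by the mean value inequality along the segments
  \<open>\<tau> \<mapsto> w + \<tau> s \<eta>\<close>, uniformly in \<open>\<tau> \<in> [0,1]\<close>.\<close>

lemma C1_tendsto_second_diffquot:
  fixes F :: "'e::{real_vector,t2_space} \<Rightarrow> 'f::{real_vector,t2_space}"
  assumes tvsE: "tvs TYPE('e)" and lcE: "locally_convex TYPE('e)"
    and tvsF: "tvs TYPE('f)" and lcF: "locally_convex TYPE('f)"
    and U: "open U" and C1: "C1 U F" and C1': "C1 U (\<lambda>u. dd F u \<eta>)" and w: "w \<in> U"
  shows "(second_diffquot F w \<xi> \<eta> \<longlongrightarrow> dd (\<lambda>u. dd F u \<eta>) w \<xi>) (at 0)"
proof (rule topological_tendstoI)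
  fix Z
  assume "open Z" "dd (\<lambda>u. dd F u \<eta>) w \<xi> \<in> Z"
  then obtain W where W: "open W" "convex W" "0 \<in> W" "\<forall>x\<in>W. - x \<in> W"
      "\<forall>x\<in>W. dd (\<lambda>u. dd F u \<eta>) w \<xi> + 2 *\<^sub>R x \<in> Z"
    using symmetric_convex_nbhd_exists[OF tvsF lcF] by blast
  interpret symmetric_convex_nbhd W
    using tvsF W by unfold_locales auto
  from C1_diffquot_near_uniformly[OF tvsE lcE tvsF lcF U C1' w open_W zero_in_W, where \<xi>=\<xi> and \<eta>=\<eta>]
  have "eventually (\<lambda>s. \<forall>\<tau>\<in>{0..1}. w + \<tau> *\<^sub>R (s *\<^sub>R \<eta>) \<in> U \<and> w + s *\<^sub>R \<xi> + \<tau> *\<^sub>R (s *\<^sub>R \<eta>) \<in> U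
      \<and> inverse s *\<^sub>R (dd F (w + s *\<^sub>R \<xi> + \<tau> *\<^sub>R (s *\<^sub>R \<eta>)) \<eta> - dd F (w + \<tau> *\<^sub>R (s *\<^sub>R \<eta>)) \<eta>)
        - dd (\<lambda>u. dd F u \<eta>) w \<xi> \<in> W) (at 0)" .
  moreover have nz: "eventually (\<lambda>s::real. s \<noteq> 0) (at 0)"
    by (simp add: eventually_at_filter)
  ultimately show "eventually (\<lambda>s. second_diffquot F w \<xi> \<eta> s \<in> Z) (at 0)"
  proof eventually_elim
    case (elim s)
    then obtain x where "x \<in> W" "second_diffquot F w \<xi> \<eta> s = dd (\<lambda>u. dd F u \<eta>) w \<xi> + 2 *\<^sub>R x"
      using second_diffquot_near[OF C1, of s w \<eta> \<xi>] by blast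
    with W(5) show ?case
      by simp
  qed
qed

lemma C1_dd_commute:
  fixes F :: "'e::{real_vector,t2_space} \<Rightarrow> 'f::{real_vector,t2_space}"
  assumes tvsE: "tvs TYPE('e)" and lcE: "locally_convex TYPE('e)"
    and tvsF: "tvs TYPE('f)" and lcF: "locally_convex TYPE('f)"
    and U: "open U" and C1: "C1 U F" and C1': "\<And>\<eta>. C1 U (\<lambda>u. dd F u \<eta>)" and w: "w \<in> U"
  shows "dd (\<lambda>u. dd F u \<eta>) w \<xi> = dd (\<lambda>u. dd F u \<xi>) w \<eta>"
proof -
  have "(second_diffquot F w \<xi> \<eta> \<longlongrightarrow> dd (\<lambda>u. dd F u \<xi>) w \<eta>) (at 0)"
    using C1_tendsto_second_diffquot[OF assms(1-6) C1' w, where \<xi>=\<eta> and \<eta>=\<xi>]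
    by (simp add: second_diffquot_commute)
  with C1_tendsto_second_diffquot[OF assms(1-6) C1' w, where \<xi>=\<xi> and \<eta>=\<eta>] show ?thesis
    by (rule tendsto_unique[OF at_neq_bot])
qed

lemma at_within_interval_neq_bot:
  assumes "is_interval (I::real set)" "interior I \<noteq> {}" "t \<in> I"
  shows "at t within I \<noteq> bot"
proof -
  have "I \<noteq> {x}" for x
    using assms(2) by auto
  then have "t islimpt I"
    using connected_imp_perfect[OF is_interval_connected[OF assms(1)] assms(3)] by blast
  then show ?thesis
    using trivial_limit_within[of t I] by (simp add: trivial_limit_def)
qed

lemma cderiv_eqI:
  assumes "at t within I \<noteq> bot" "((\<lambda>s. inverse (s - t) *\<^sub>R (x s - x t)) \<longlongrightarrow> l) (at t within I)"
  shows "cderiv x I t = l"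
  unfolding cderiv_def by (rule tendsto_Lim) (use assms in \<open>auto simp: trivial_limit_def\<close>)

lemma C1_curve_tendsto_cderiv:
  assumes "C1_curve I x" "at t within I \<noteq> bot" "t \<in> I"
  shows "((\<lambda>s. inverse (s - t) *\<^sub>R (x s - x t)) \<longlongrightarrow> cderiv x I t) (at t within I)"
proof -
  obtain l where l: "((\<lambda>s. inverse (s - t) *\<^sub>R (x s - x t)) \<longlongrightarrow> l) (at t within I)"
    using assms(1,3) unfolding C1_curve_def by blast
  with cderiv_eqI[OF assms(2) l] show ?thesis
    by simp
qed

lemma C1_curveI:
  assumes nontriv: "\<And>t. t \<in> I \<Longrightarrow> at t within I \<noteq> bot"
    and deriv: "\<And>t. t \<in> I \<Longrightarrow> ((\<lambda>s. inverse (s - t) *\<^sub>R (x s - x t)) \<longlongrightarrow> x' t) (at t within I)"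
    and "continuous_on I x'"
  shows "C1_curve I x" "\<And>t. t \<in> I \<Longrightarrow> cderiv x I t = x' t"
proof -
  show cderiv_eq: "cderiv x I t = x' t" if "t \<in> I" for t
    using cderiv_eqI[OF nontriv[OF that] deriv[OF that]] .
  have "continuous_on I (cderiv x I) = continuous_on I x'"
    by (rule continuous_on_cong) (simp_all add: cderiv_eq)
  then have "continuous_on I (cderiv x I)"
    using \<open>continuous_on I x'\<close> by simp
  with deriv show "C1_curve I x"
    unfolding C1_curve_def by blast
qed

lemma cderiv_cong:
  assumes "\<And>s. s \<in> I \<Longrightarrow> x s = x' s" "t \<in> I"
  shows "cderiv x I t = cderiv x' I t"
proof -
  have "eventually (\<lambda>s. inverse (s - t) *\<^sub>R (x s - x t) = inverse (s - t) *\<^sub>R (x' s - x' t)) (at t within I)"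
    using assms by (auto simp: eventually_at_filter)
  then have "(\<lambda>l. ((\<lambda>s. inverse (s - t) *\<^sub>R (x s - x t)) \<longlongrightarrow> l) (at t within I))
      = (\<lambda>l. ((\<lambda>s. inverse (s - t) *\<^sub>R (x' s - x' t)) \<longlongrightarrow> l) (at t within I))"
    by (intro ext tendsto_cong)
  then show ?thesis
    unfolding cderiv_def t2_space_class.Lim_def by simp
qed

lemma C1_curve_cong:
  assumes eq: "\<And>s. s \<in> I \<Longrightarrow> x s = x' s" and C1: "C1_curve I x"
  shows "C1_curve I x'"
  unfolding C1_curve_def
proof
  show "\<forall>t\<in>I. \<exists>l. ((\<lambda>s. inverse (s - t) *\<^sub>R (x' s - x' t)) \<longlongrightarrow> l) (at t within I)"
  proof
    fix t
    assume "t \<in> I"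
    then have ev: "eventually (\<lambda>s. inverse (s - t) *\<^sub>R (x s - x t) = inverse (s - t) *\<^sub>R (x' s - x' t))
        (at t within I)"
      using eq by (auto simp: eventually_at_filter)
    obtain l where l: "((\<lambda>s. inverse (s - t) *\<^sub>R (x s - x t)) \<longlongrightarrow> l) (at t within I)"
      using C1 \<open>t \<in> I\<close> unfolding C1_curve_def by blast
    show "\<exists>l. ((\<lambda>s. inverse (s - t) *\<^sub>R (x' s - x' t)) \<longlongrightarrow> l) (at t within I)"
      using tendsto_cong[OF ev, THEN iffD1, OF l] by blast
  qed
  have "continuous_on I (cderiv x I) = continuous_on I (cderiv x' I)"
    by (rule continuous_on_cong) (simp_all add: cderiv_cong[OF eq])
  with C1 show "continuous_on I (cderiv x' I)"
    unfolding C1_curve_def by simp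
qed

lemma continuous_on_if_C1_curve:
  fixes x :: "real \<Rightarrow> 'e::{real_vector,t2_space}"
  assumes "tvs TYPE('e)" "C1_curve I x"
  shows "continuous_on I x"
  unfolding continuous_on_def
proof
  fix t
  assume "t \<in> I"
  then obtain l where "((\<lambda>s. inverse (s - t) *\<^sub>R (x s - x t)) \<longlongrightarrow> l) (at t within I)"
    using assms(2) unfolding C1_curve_def by blast
  then show "(x \<longlongrightarrow> x t) (at t within I)"
    by (rule tvs_tendsto_if_curve_deriv[OF assms(1)])
qed

lemma C1_curve_Pair:
  assumes "is_interval I" "interior I \<noteq> {}" "C1_curve I x" "C1_curve I y"
  shows "C1_curve I (\<lambda>t. (x t, y t))"
    and "\<And>t. t \<in> I \<Longrightarrow> cderiv (\<lambda>t. (x t, y t)) I t = (cderiv x I t, cderiv y I t)"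
proof -
  note nontriv = at_within_interval_neq_bot[OF assms(1,2)]
  have "((\<lambda>s. inverse (s - t) *\<^sub>R ((x s, y s) - (x t, y t))) \<longlongrightarrow> (cderiv x I t, cderiv y I t)) (at t within I)"
    if "t \<in> I" for t
    using tendsto_Pair[OF C1_curve_tendsto_cderiv[OF assms(3) nontriv[OF that] that]
        C1_curve_tendsto_cderiv[OF assms(4) nontriv[OF that] that]]
    by simp
  moreover have "continuous_on I (\<lambda>t. (cderiv x I t, cderiv y I t))"
    using assms(3,4) unfolding C1_curve_def by (intro continuous_on_Pair) auto
  ultimately show "C1_curve I (\<lambda>t. (x t, y t))"
    and "\<And>t. t \<in> I \<Longrightarrow> cderiv (\<lambda>t. (x t, y t)) I t = (cderiv x I t, cderiv y I t)"
    using C1_curveI[OF nontriv, of "\<lambda>t. (x t, y t)" "\<lambda>t. (cderiv x I t, cderiv y I t)"] by blast+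
qed

lemma C1_curve_compose:
  fixes \<Phi> :: "'e::{real_vector,t2_space} \<Rightarrow> 'f::{real_vector,t2_space}" and c :: "real \<Rightarrow> 'e"
  assumes tvsE: "tvs TYPE('e)" and lcE: "locally_convex TYPE('e)"
    and tvsF: "tvs TYPE('f)" and lcF: "locally_convex TYPE('f)"
    and U: "open U" and C1: "C1 U \<Phi>"
    and I: "is_interval I" "interior I \<noteq> {}" and c: "C1_curve I c" "\<And>t. t \<in> I \<Longrightarrow> c t \<in> U"
  shows "C1_curve I (\<Phi> \<circ> c)"
    and "\<And>t. t \<in> I \<Longrightarrow> cderiv (\<Phi> \<circ> c) I t = dd \<Phi> (c t) (cderiv c I t)"
proof -
  note nontriv = at_within_interval_neq_bot[OF I]
  have deriv: "((\<lambda>s. inverse (s - t) *\<^sub>R ((\<Phi> \<circ> c) s - (\<Phi> \<circ> c) t)) \<longlongrightarrow> dd \<Phi> (c t) (cderiv c I t)) (at t within I)"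
    if "t \<in> I" for t
    unfolding comp_def
    by (rule C1_tendsto_curve_compose[OF tvsE lcE tvsF lcF U C1 c(2)[OF that]
        C1_curve_tendsto_cderiv[OF c(1) nontriv[OF that] that]])
  have "continuous_on I (cderiv c I)"
    using c(1) unfolding C1_curve_def by blast
  with continuous_on_if_C1_curve[OF tvsE c(1)]
  have pair: "continuous_on I (\<lambda>t. (c t, cderiv c I t))"
    by (rule continuous_on_Pair)
  have image: "(\<lambda>t. (c t, cderiv c I t)) ` I \<subseteq> U \<times> UNIV"
    using c(2) by blast
  have "continuous_on (U \<times> UNIV) (\<lambda>(v, \<xi>). dd \<Phi> v \<xi>)"
    using C1 unfolding C1_def by blast
  from continuous_on_compose2[OF this pair image]
  have "continuous_on I (\<lambda>t. (\<lambda>(v, \<xi>). dd \<Phi> v \<xi>) (c t, cderiv c I t))" .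
  then have "continuous_on I (\<lambda>t. dd \<Phi> (c t) (cderiv c I t))"
    by simp
  from C1_curveI[OF nontriv deriv this]
  show "C1_curve I (\<Phi> \<circ> c)" and "\<And>t. t \<in> I \<Longrightarrow> cderiv (\<Phi> \<circ> c) I t = dd \<Phi> (c t) (cderiv c I t)"
    by blast+
qed

section \<open>Riemannian isometries\<close>

lemma riemannian_metric_bilinear:
  assumes "riemannian_metric \<Omega> g" "v \<in> \<Omega>"
  shows "g v (a + b) c = g v a c + g v b c" "g v (r *\<^sub>R a) c = r * g v a c"
    "g v a (b + c) = g v a b + g v a c" "g v a (r *\<^sub>R b) = r * g v a b"
    "g v (a - b) c = g v a c - g v b c" "g v a b = g v b a"
proof -
  have l1: "linear (\<lambda>\<xi>. g v \<xi> c)" and l2: "linear (g v a)"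
    using assms unfolding riemannian_metric_def by auto
  show "g v (a + b) c = g v a c + g v b c" "g v (r *\<^sub>R a) c = r * g v a c"
    "g v (a - b) c = g v a c - g v b c"
    using real_vector.linear_add[OF l1] linear_cmul[OF l1] real_vector.linear_diff[OF l1] by simp_all
  show "g v a (b + c) = g v a b + g v a c" "g v a (r *\<^sub>R b) = r * g v a b"
    using real_vector.linear_add[OF l2] linear_cmul[OF l2] by simp_all
  show "g v a b = g v b a"
    using assms unfolding riemannian_metric_def by blast
qed

text \<open>Evaluated on constant vector fields, whose covariant derivative is just the Christoffel
  term.\<close>

lemma levi_civita_koszul:
  assumes LC: "levi_civita \<Omega> g A" and v: "v \<in> \<Omega>"
  shows "2 * g v (A v \<xi> \<eta>) \<zeta>
    = dd (\<lambda>u. g u \<eta> \<zeta>) v \<xi> + dd (\<lambda>u. g u \<xi> \<zeta>) v \<eta> - dd (\<lambda>u. g u \<xi> \<eta>) v \<zeta>"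
proof -
  have sym: "g v x y = g v y x" for x y
    using LC v riemannian_metric_bilinear(6) unfolding levi_civita_def C1_metric_def by blast
  have A_sym: "A v x y = A v y x" for x y
    using LC v unfolding levi_civita_def by blast
  have "dd (\<lambda>u. g u b c) v a = g v (A v a b) c + g v b (A v a c)" for a b c
    using LC v C1_const[of \<Omega> b] C1_const[of \<Omega> c] unfolding levi_civita_def
    by (simp add: covd_def dd_const)
  then show ?thesis
    using A_sym[of \<eta> \<xi>] A_sym[of \<zeta> \<xi>] A_sym[of \<zeta> \<eta>] sym[of \<eta> "A v \<xi> \<zeta>"] by simp
qed

text \<open>Differentiating \<open>F \<circ> F\<^sup>-\<^sup>1 = id\<close> shows that \<open>dF\<close> is onto.\<close>

lemma surj_dd_if_C1_inverse:
  fixes F :: "'b::{real_vector,t2_space} \<Rightarrow> 'a::{real_vector,t2_space}"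
  assumes tvsA: "tvs TYPE('a)" and lcA: "locally_convex TYPE('a)"
    and tvsB: "tvs TYPE('b)" and lcB: "locally_convex TYPE('b)"
    and U: "open U" and C1: "C1 U F" and inj: "inj_on F U" and "open (F ` U)"
    and C1_inv: "C1 (F ` U) (the_inv_into U F)" and w: "w \<in> U"
  shows "\<exists>\<zeta>. dd F w \<zeta> = x"
proof -
  define G where "G = the_inv_into U F"
  have Fw: "F w \<in> F ` U" and GFw: "G (F w) = w"
    using inj w by (simp_all add: G_def the_inv_into_f_f)
  from C1_tendsto_diffquot_compose[OF tvsB lcB tvsA lcA U C1 _ C1_tendsto_dd[OF C1_inv[folded G_def] Fw]]
  have lim: "(diffquot (\<lambda>u. F (G u)) (F w) x \<longlongrightarrow> dd F w (dd G (F w) x)) (at 0)"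
    using GFw w by simp
  have "eventually (\<lambda>r. F w + r *\<^sub>R x \<in> F ` U \<and> r \<noteq> 0) (at 0)"
    using tvs_eventually_line_in_open[OF tvsA \<open>open (F ` U)\<close> Fw, of x]
    by (simp add: eventually_conj_iff eventually_at_filter)
  then have "eventually (\<lambda>r. diffquot (\<lambda>u. F (G u)) (F w) x r = x) (at 0)"
  proof eventually_elim
    case (elim r)
    then have "F (G (F w + r *\<^sub>R x)) = F w + r *\<^sub>R x"
      unfolding G_def by (intro f_the_inv_into_f inj) auto
    with elim GFw show ?case
      by (simp add: diffquot_def)
  qed
  then have "(diffquot (\<lambda>u. F (G u)) (F w) x \<longlongrightarrow> x) (at 0)"
    by (simp add: tendsto_cong)
  with lim have "dd F w (dd G (F w) x) = x"
    by (rule tendsto_unique[OF at_neq_bot])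
  then show ?thesis
    by blast
qed

lemma dd_metric_triple:
  fixes g :: "'a::{real_vector,t2_space} \<Rightarrow> 'a \<Rightarrow> 'a \<Rightarrow> real"
  assumes tvs: "tvs TYPE('a)" and lc: "locally_convex TYPE('a)"
    and "open \<Omega>" and C1: "C1_metric \<Omega> g" and v: "v \<in> \<Omega>"
  shows "dd (\<lambda>(v, \<xi>, \<eta>). g v \<xi> \<eta>) (v, a, b) (\<alpha>, \<beta>, \<gamma>)
    = dd (\<lambda>u. g u a b) v \<alpha> + g v \<beta> b + g v a \<gamma>"
proof -
  define G where "G = (\<lambda>(v, \<xi>, \<eta>). g v \<xi> \<eta>)"
  have rm: "riemannian_metric \<Omega> g"
    using C1 unfolding C1_metric_def by blast
  have "dd G (v, a, b) (\<alpha>, 0, 0) = dd (\<lambda>u. g u a b) v \<alpha>"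
    unfolding dd_def G_def by (simp add: diffquot_def[abs_def])
  moreover have "dd G (v, a, b) (0, \<beta>, 0) = g v \<beta> b" "dd G (v, a, b) (0, 0, \<gamma>) = g v a \<gamma>"
    by (rule dd_eqI, rule tendsto_eventually,
        simp add: eventually_at_filter diffquot_def G_def riemannian_metric_bilinear[OF rm v])+
  moreover have add: "dd G (v, a, b) (\<xi> + \<eta>) = dd G (v, a, b) \<xi> + dd G (v, a, b) \<eta>" for \<xi> \<eta>
    using dd_add[OF tvs_prod[OF tvs tvs_prod[OF tvs tvs]] locally_convex_prod[OF lc locally_convex_prod[OF lc lc]]
        tvs_real locally_convex_real, of "\<Omega> \<times> UNIV" G "(v, a, b)" \<xi> \<eta>] \<open>open \<Omega>\<close> C1 v
    unfolding C1_metric_def G_def by (simp add: open_Times)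
  moreover have "dd G (v, a, b) (\<alpha>, \<beta>, \<gamma>)
      = dd G (v, a, b) (\<alpha>, 0, 0) + (dd G (v, a, b) (0, \<beta>, 0) + dd G (v, a, b) (0, 0, \<gamma>))"
    using add[of "(\<alpha>, 0, 0)" "(0, \<beta>, 0) + (0, 0, \<gamma>)"] add[of "(0, \<beta>, 0)" "(0, 0, \<gamma>)"] by simp
  ultimately show ?thesis
    unfolding G_def by simp
qed

locale riemannian_isometry =
  fixes \<Omega> :: "'a::{real_vector,t2_space} set" and \<Omega>' :: "'b::{real_vector,t2_space} set"
    and g :: "'a \<Rightarrow> 'a \<Rightarrow> 'a \<Rightarrow> real" and g' :: "'b \<Rightarrow> 'b \<Rightarrow> 'b \<Rightarrow> real"
    and A :: "'a \<Rightarrow> 'a \<Rightarrow> 'a \<Rightarrow> 'a" and A' :: "'b \<Rightarrow> 'b \<Rightarrow> 'b \<Rightarrow> 'b"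
    and F :: "'b \<Rightarrow> 'a"
  assumes tvs: "tvs TYPE('a)" and tvs': "tvs TYPE('b)"
    and lc: "locally_convex TYPE('a)" and lc': "locally_convex TYPE('b)"
    and open_\<Omega>: "open \<Omega>" and open_\<Omega>': "open \<Omega>'"
    and levi_civita: "levi_civita \<Omega> g A" and levi_civita': "levi_civita \<Omega>' g' A'"
    and isometry: "C2_isometry \<Omega>' g' \<Omega> g F"
begin

lemma C1_F: "C1 \<Omega>' F"
  and C1_dF: "C1 (\<Omega>' \<times> UNIV) (\<lambda>(v, \<xi>). dd F v \<xi>)"
  and C1_inverse: "C1 (F ` \<Omega>') (the_inv_into \<Omega>' F)"
  and open_image: "open (F ` \<Omega>')" and inj_F: "inj_on F \<Omega>'"
  and F_in: "w \<in> \<Omega>' \<Longrightarrow> F w \<in> \<Omega>"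
  and isometric: "w \<in> \<Omega>' \<Longrightarrow> g (F w) (dd F w \<zeta>) (dd F w \<zeta>) = g' w \<zeta> \<zeta>"
  using isometry unfolding C2_isometry_def C2_diffeo_onto_open_def C2_def by auto

lemma C1_metric: "C1_metric \<Omega> g"
  and metric: "riemannian_metric \<Omega> g" "riemannian_metric \<Omega>' g'"
  using levi_civita levi_civita' unfolding levi_civita_def C1_metric_def by auto

lemma dd_F_add: "w \<in> \<Omega>' \<Longrightarrow> dd F w (x + y) = dd F w x + dd F w y"
  by (rule dd_add[OF tvs' lc' tvs lc open_\<Omega>' C1_F])

lemma dd_F_scaleR: "w \<in> \<Omega>' \<Longrightarrow> dd F w (c *\<^sub>R x) = c *\<^sub>R dd F w x"
  by (rule dd_scaleR[OF tvs C1_F])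

lemma isometry_polarized:
  assumes w: "w \<in> \<Omega>'"
  shows "g' w a b = g (F w) (dd F w a) (dd F w b)"
  using isometric[OF w, of "a + b"] isometric[OF w, of a] isometric[OF w, of b]
    riemannian_metric_bilinear[OF metric(1) F_in[OF w]] riemannian_metric_bilinear[OF metric(2) w]
  by (simp add: dd_F_add[OF w])

definition d2F :: "'b \<Rightarrow> 'b \<Rightarrow> 'b \<Rightarrow> 'a" where
  "d2F w a b = dd (\<lambda>u. dd F u b) w a"

lemma C1_dd_F: "C1 \<Omega>' (\<lambda>u. dd F u b)"
  using C1_slice[OF C1_dF, of b] by simp

lemma d2F_commute: "w \<in> \<Omega>' \<Longrightarrow> d2F w a b = d2F w b a"
  unfolding d2F_def by (rule C1_dd_commute[OF tvs' lc' tvs lc open_\<Omega>' C1_F C1_dd_F])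

lemma dd_dF:
  assumes w: "w \<in> \<Omega>'"
  shows "dd (\<lambda>(v, \<xi>). dd F v \<xi>) (w, e) (a, b) = d2F w a e + dd F w b"
proof -
  have "dd (\<lambda>(v, \<xi>). dd F v \<xi>) (w, e) ((a, 0) + (0, b))
      = dd (\<lambda>(v, \<xi>). dd F v \<xi>) (w, e) (a, 0) + dd (\<lambda>(v, \<xi>). dd F v \<xi>) (w, e) (0, b)"
    using w by (intro dd_add[OF tvs_prod[OF tvs' tvs'] locally_convex_prod[OF lc' lc'] tvs lc _ C1_dF])
      (simp_all add: open_Times open_\<Omega>')
  moreover have "dd (\<lambda>(v, \<xi>). dd F v \<xi>) (w, e) (a, 0) = d2F w a e"
    using dd_slice[of "\<lambda>(v, \<xi>). dd F v \<xi>" e w a] by (simp add: d2F_def)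
  moreover have "dd (\<lambda>(v, \<xi>). dd F v \<xi>) (w, e) (0, b) = dd F w b"
    by (rule dd_eqI, rule tendsto_eventually)
      (simp add: eventually_at_filter diffquot_def dd_F_add[OF w] dd_F_scaleR[OF w])
  ultimately show ?thesis
    by simp
qed

lemma dd_metric_pullback:
  assumes w: "w \<in> \<Omega>'"
  shows "dd (\<lambda>u. g' u \<eta> \<zeta>) w \<xi> = dd (\<lambda>u. g u (dd F w \<eta>) (dd F w \<zeta>)) (F w) (dd F w \<xi>)
          + g (F w) (d2F w \<xi> \<eta>) (dd F w \<zeta>) + g (F w) (dd F w \<eta>) (d2F w \<xi> \<zeta>)"
proof (rule dd_eqI)
  define \<psi> where "\<psi> u = (F u, dd F u \<eta>, dd F u \<zeta>)" for u
  have deriv: "(diffquot \<psi> w \<xi> \<longlongrightarrow> (dd F w \<xi>, d2F w \<xi> \<eta>, d2F w \<xi> \<zeta>)) (at 0)"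
    using tendsto_Pair[OF C1_tendsto_dd[OF C1_F w]
        tendsto_Pair[OF C1_tendsto_dd[OF C1_dd_F w] C1_tendsto_dd[OF C1_dd_F w]]]
    by (simp add: d2F_def diffquot_def[abs_def] \<psi>_def)
  moreover have "open (\<Omega> \<times> (UNIV :: 'a set) \<times> (UNIV :: 'a set))" "\<psi> w \<in> \<Omega> \<times> UNIV \<times> UNIV"
    using open_\<Omega> F_in[OF w] by (simp_all add: open_Times \<psi>_def)
  moreover have "C1 (\<Omega> \<times> UNIV \<times> UNIV) (\<lambda>(v, \<xi>, \<eta>). g v \<xi> \<eta>)"
    using C1_metric(1) unfolding C1_metric_def by blast
  ultimately have "(diffquot (\<lambda>u. (\<lambda>(v, \<xi>, \<eta>). g v \<xi> \<eta>) (\<psi> u)) w \<xi>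
      \<longlongrightarrow> dd (\<lambda>(v, \<xi>, \<eta>). g v \<xi> \<eta>) (\<psi> w) (dd F w \<xi>, d2F w \<xi> \<eta>, d2F w \<xi> \<zeta>)) (at 0)"
    by (intro C1_tendsto_diffquot_compose[OF tvs_prod[OF tvs tvs_prod[OF tvs tvs]]
      locally_convex_prod[OF lc locally_convex_prod[OF lc lc]] tvs_real locally_convex_real])
  then have "(diffquot (\<lambda>u. g (F u) (dd F u \<eta>) (dd F u \<zeta>)) w \<xi>
      \<longlongrightarrow> dd (\<lambda>(v, \<xi>, \<eta>). g v \<xi> \<eta>) (\<psi> w) (dd F w \<xi>, d2F w \<xi> \<eta>, d2F w \<xi> \<zeta>)) (at 0)"
    by (simp add: \<psi>_def)
  moreover have "eventually (\<lambda>r. diffquot (\<lambda>u. g (F u) (dd F u \<eta>) (dd F u \<zeta>)) w \<xi> r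
      = diffquot (\<lambda>u. g' u \<eta> \<zeta>) w \<xi> r) (at 0)"
    using tvs_eventually_line_in_open[OF tvs' open_\<Omega>' w, of \<xi>]
    by eventually_elim (simp add: diffquot_def isometry_polarized w)
  ultimately show "(diffquot (\<lambda>u. g' u \<eta> \<zeta>) w \<xi> \<longlongrightarrow> dd (\<lambda>u. g u (dd F w \<eta>) (dd F w \<zeta>)) (F w) (dd F w \<xi>)
          + g (F w) (d2F w \<xi> \<eta>) (dd F w \<zeta>) + g (F w) (dd F w \<eta>) (d2F w \<xi> \<zeta>)) (at 0)"
    using dd_metric_triple[OF tvs lc open_\<Omega> C1_metric(1) F_in[OF w]]
    by (simp add: \<psi>_def tendsto_cong)
qed

text \<open>Pulling the Koszul formula of \<open>g\<close> back along \<open>F\<close> and comparing with that of \<open>g'\<close>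
  shows that both sides have the same \<open>g\<close>-inner product with every \<open>dF \<zeta>\<close>; since \<open>dF\<close>
  is onto and \<open>g\<close> is definite they agree.\<close>

lemma dd_F_christoffel:
  assumes w: "w \<in> \<Omega>'"
  shows "dd F w (A' w \<xi> \<eta>) = A (F w) (dd F w \<xi>) (dd F w \<eta>) + d2F w \<xi> \<eta>"
proof -
  define v where "v = F w"
  have v: "v \<in> \<Omega>"
    unfolding v_def by (rule F_in[OF w])
  note bilinear = riemannian_metric_bilinear[OF metric(1) v]
  define y where "y = dd F w (A' w \<xi> \<eta>) - A v (dd F w \<xi>) (dd F w \<eta>) - d2F w \<xi> \<eta>"
  have orthogonal: "g v y (dd F w \<zeta>) = 0" for \<zeta>
  proof -
    have commute: "d2F w \<eta> \<xi> = d2F w \<xi> \<eta>" "d2F w \<zeta> \<xi> = d2F w \<xi> \<zeta>" "d2F w \<zeta> \<eta> = d2F w \<eta> \<zeta>"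
      using d2F_commute[OF w] by auto
    have "2 * g' w (A' w \<xi> \<eta>) \<zeta>
        = 2 * g v (A v (dd F w \<xi>) (dd F w \<eta>)) (dd F w \<zeta>) + 2 * g v (d2F w \<xi> \<eta>) (dd F w \<zeta>)"
      using levi_civita_koszul[OF levi_civita' w, of \<xi> \<eta> \<zeta>]
        levi_civita_koszul[OF levi_civita v, of "dd F w \<xi>" "dd F w \<eta>" "dd F w \<zeta>"]
        dd_metric_pullback[OF w, of \<eta> \<zeta> \<xi>] dd_metric_pullback[OF w, of \<xi> \<zeta> \<eta>, unfolded commute]
        dd_metric_pullback[OF w, of \<xi> \<eta> \<zeta>, unfolded commute]
        bilinear(6)[of "dd F w \<eta>" "d2F w \<xi> \<zeta>"] bilinear(6)[of "dd F w \<xi>" "d2F w \<eta> \<zeta>"]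
      unfolding v_def by linarith
    then show ?thesis
      using isometry_polarized[OF w, of "A' w \<xi> \<eta>" \<zeta>, folded v_def] by (simp add: y_def bilinear(5))
  qed
  obtain \<zeta> where "dd F w \<zeta> = y"
    using surj_dd_if_C1_inverse[OF tvs lc tvs' lc' open_\<Omega>' C1_F inj_F open_image C1_inverse w] by blast
  with orthogonal have "g v y y = 0"
    by metis
  then have "y = 0"
    using metric(1) v unfolding riemannian_metric_def by (metis less_irrefl)
  then show ?thesis
    by (simp add: y_def v_def algebra_simps)
qed

lemma parallel_lift_pushforward:
  assumes I: "is_interval I" "interior I \<noteq> {}" and lift: "parallel_lift \<Omega>' A' I y \<eta>"
  shows "parallel_lift \<Omega> A I (F \<circ> y) (\<lambda>t. dd F (y t) (\<eta> t))"
proof -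
  have y: "\<And>t. t \<in> I \<Longrightarrow> y t \<in> \<Omega>'" "C1_curve I y" and \<eta>: "C1_curve I \<eta>"
    and parallel: "\<And>t. t \<in> I \<Longrightarrow> cderiv \<eta> I t + A' (y t) (cderiv y I t) (\<eta> t) = 0"
    using lift unfolding parallel_lift_def by auto
  note image = C1_curve_compose[OF tvs' lc' tvs lc open_\<Omega>' C1_F I y(2,1)]
  note pair = C1_curve_Pair[OF I y(2) \<eta>]
  have push: "(\<lambda>t. dd F (y t) (\<eta> t)) = (\<lambda>(v, \<xi>). dd F v \<xi>) \<circ> (\<lambda>t. (y t, \<eta> t))"
    by (simp add: fun_eq_iff)
  have bundle_open: "open (\<Omega>' \<times> (UNIV :: 'b set))"
    using open_\<Omega>' by (simp add: open_Times)
  have in_bundle: "\<And>t. t \<in> I \<Longrightarrow> (y t, \<eta> t) \<in> \<Omega>' \<times> UNIV"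
    using y(1) by simp
  note lift_image = C1_curve_compose[OF tvs_prod[OF tvs' tvs'] locally_convex_prod[OF lc' lc'] tvs lc
      bundle_open C1_dF I pair(1) in_bundle, folded push]
  have "C1_curve I (\<lambda>t. dd F (y t) (\<eta> t))"
    by (rule lift_image(1))
  moreover have "cderiv (\<lambda>t. dd F (y t) (\<eta> t)) I t
      = d2F (y t) (cderiv y I t) (\<eta> t) + dd F (y t) (cderiv \<eta> I t)" if "t \<in> I" for t
    using lift_image(2)[of t] that y(1)[OF that] by (simp add: pair(2)[OF that] dd_dF)
  moreover have "dd F (y t) (cderiv \<eta> I t) = - dd F (y t) (A' (y t) (cderiv y I t) (\<eta> t))" if "t \<in> I" for t
  proof -
    have "cderiv \<eta> I t = - A' (y t) (cderiv y I t) (\<eta> t)"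
      using parallel[OF that] by (simp add: eq_neg_iff_add_eq_0)
    then show ?thesis
      using dd_uminus[OF tvs C1_F y(1)[OF that]] by simp
  qed
  ultimately show ?thesis
    using image y(1) F_in I unfolding parallel_lift_def
    by (auto simp: dd_F_christoffel)
qed

lemma geodesic_pushforward:
  assumes I: "is_interval I" "interior I \<noteq> {}" and geo: "geodesic \<Omega>' A' I y"
  shows "geodesic \<Omega> A I (F \<circ> y)"
proof -
  have y: "\<And>t. t \<in> I \<Longrightarrow> y t \<in> \<Omega>'" "C1_curve I y"
    using geo unfolding geodesic_def C2_curve_def by auto
  have "parallel_lift \<Omega>' A' I y (cderiv y I)"
    using geo unfolding geodesic_def C2_curve_def parallel_lift_def by auto
  from parallel_lift_pushforward[OF I this]
  have lift: "parallel_lift \<Omega> A I (F \<circ> y) (\<lambda>t. dd F (y t) (cderiv y I t))" .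
  have velocity: "\<And>t. t \<in> I \<Longrightarrow> dd F (y t) (cderiv y I t) = cderiv (F \<circ> y) I t"
    using C1_curve_compose(2)[OF tvs' lc' tvs lc open_\<Omega>' C1_F I y(2,1)] by simp
  with lift show ?thesis
    unfolding geodesic_def C2_curve_def parallel_lift_def
    using C1_curve_cong[of I "\<lambda>t. dd F (y t) (cderiv y I t)" "cderiv (F \<circ> y) I"]
      cderiv_cong[of I "\<lambda>t. dd F (y t) (cderiv y I t)" "cderiv (F \<circ> y) I"]
    by auto
qed

end

theorem lemma6p5:
  fixes \<Omega> :: "'a::{real_vector,t2_space} set" and \<Omega>' :: "'b::{real_vector,t2_space} set"
    and g :: "'a \<Rightarrow> 'a \<Rightarrow> 'a \<Rightarrow> real" and g' :: "'b \<Rightarrow> 'b \<Rightarrow> 'b \<Rightarrow> real"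
    and A :: "'a \<Rightarrow> 'a \<Rightarrow> 'a \<Rightarrow> 'a" and A' :: "'b \<Rightarrow> 'b \<Rightarrow> 'b \<Rightarrow> 'b"
    and F :: "'b \<Rightarrow> 'a"
  assumes "lcs_space TYPE('a)" and "lcs_space TYPE('b)"
    and "open \<Omega>" and "open \<Omega>'"
    and "riemannian_metric \<Omega> g" and "riemannian_metric \<Omega>' g'"
    and "levi_civita \<Omega> g A" and "levi_civita \<Omega>' g' A'"
    and "C1_connection \<Omega> A" and "C1_connection \<Omega>' A'"
    and "C2_isometry \<Omega>' g' \<Omega> g F"
  shows "(\<forall>(I::real set) y \<eta>. is_interval I \<and> interior I \<noteq> {} \<longrightarrow>
            parallel_lift \<Omega>' A' I y \<eta> \<longrightarrow>
            parallel_lift \<Omega> A I (F \<circ> y) (\<lambda>t. dd F (y t) (\<eta> t)))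
       \<and> (\<forall>(I::real set) y. is_interval I \<and> interior I \<noteq> {} \<longrightarrow>
            geodesic \<Omega>' A' I y \<longrightarrow> geodesic \<Omega> A I (F \<circ> y))"
proof -
  interpret riemannian_isometry \<Omega> \<Omega>' g g' A A' F
    using tvs_if_lcs_space[OF assms(1)] tvs_if_lcs_space[OF assms(2)]
      locally_convex_if_lcs_space[OF assms(1)] locally_convex_if_lcs_space[OF assms(2)] assms(3,4,7,8,11)
    by unfold_locales
  show ?thesis
    using parallel_lift_pushforward geodesic_pushforward by blast
qed

end
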